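(* Let $\mathcal{C}$ be a finite class of pairwise disjoint nonempty subsets of $\mathcal{V}$, let $\nu$ be the uniform prior on $\mathcal{C}$, let $\Phi$ be a parameter set carrying a probability measure $\pi$, and let $\{\Gamma(\phi):\phi\in\Phi\}$ be a family of covariance matrices indexed by $\mathcal{V}$ such that every principal submatrix $\Gamma_S(\phi)$ is nonsingular. Then \[ \bar R^*_{\nu,\pi}\;\ge\;1-\frac{1}{2|\mathcal{C}|}\Big(\sum_{S\in\mathcal{C}}V_S\Big)^{1/2}, \qquad V_S:=\mathbb{E}_{\pi}\left[\left(\frac{\det(\Gamma_S^{-1}(\phi_1))\det(\Gamma_S^{-1}(\phi_2))}{\det\big(\Gamma_S^{-1}(\phi_1)+\Gamma_S^{-1}(\phi_2)-I_S\big)}\right)^{1/2}\right], \] where $\phi_1,\phi_2$ are drawn i.i.d. from $\pi$. (If $\Gamma_S^{-1}(\phi_1)+\Gamma_S^{-1}(\phi_2)-I_S$ fails to be positive definite with positive $\pi\otimes\pi$-probability, $V_S$ is interpreted as $+\infty$ and the bound is trivial.)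
   Context: Testing setting: $\mathcal{V}=\{1,\dots,m\}^d$. One observes $X=(X_i)_{i\in\mathcal V}$. Under $\mathbb{P}_0$ the $X_i$ are i.i.d. $N(0,1)$. For $S\subset\mathcal V$ and a covariance matrix $\Gamma$, under $\mathbb{P}_{S,\Gamma}$ the vector $X_S=(X_i)_{i\in S}$ is $N(0,\Gamma_S)$ (with $\Gamma_S$ the principal submatrix indexed by $S$), independent of $(X_i)_{i\notin S}$, which are i.i.d. $N(0,1)$. A test is a measurable $f:\mathbb{R}^{\mathcal V}\to\{0,1\}$. For a prior $\nu$ on $\mathcal C$ and a prior $\pi$ on $\Phi$, the Bayes risk is $\bar R^*_{\nu,\pi}=\inf_f\Big[\mathbb{P}_0\{f(X)=1\}+\sum_{S\in\mathcal C}\nu(S)\int\mathbb{P}_{S,\Gamma(\phi)}\{f(X)=0\}\,\pi(d\phi)\Big]$, the infimum over all tests. $I_S$ is the identity matrix indexed by $S$. *)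

theory Defs
  imports "HOL-Probability.Probability"
begin

text \<open>The index set V = {1..m}^d, vertices represented as lists of length d.\<close>
definition grid :: "nat \<Rightarrow> nat \<Rightarrow> nat list set" where
  "grid m d = {v. length v = d \<and> set v \<subseteq> {1..m}}"

definition det_on :: "'a set \<Rightarrow> ('a \<Rightarrow> 'a \<Rightarrow> real) \<Rightarrow> real" where
  "det_on S A = (\<Sum>p | p permutes S. of_int (sign p) * (\<Prod>i\<in>S. A i (p i)))"

definition inv_on :: "'a set \<Rightarrow> ('a \<Rightarrow> 'a \<Rightarrow> real) \<Rightarrow> ('a \<Rightarrow> 'a \<Rightarrow> real)" where
  "inv_on S A = (SOME B. (\<forall>i\<in>S. \<forall>j\<in>S. (\<Sum>k\<in>S. B i k * A k j) = (if i = j then 1 else 0))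
                        \<and> (\<forall>i j. i \<notin> S \<or> j \<notin> S \<longrightarrow> B i j = 0))"

definition pos_def_on :: "'a set \<Rightarrow> ('a \<Rightarrow> 'a \<Rightarrow> real) \<Rightarrow> bool" where
  "pos_def_on S A = (\<forall>x. (\<exists>i\<in>S. x i \<noteq> 0) \<longrightarrow> 0 < (\<Sum>i\<in>S. \<Sum>j\<in>S. x i * A i j * x j))"

definition covariance_matrix :: "'a set \<Rightarrow> ('a \<Rightarrow> 'a \<Rightarrow> real) \<Rightarrow> bool" where
  "covariance_matrix V A = ((\<forall>i\<in>V. \<forall>j\<in>V. A i j = A j i) \<and>
      (\<forall>x. 0 \<le> (\<Sum>i\<in>V. \<Sum>j\<in>V. x i * A i j * x j)))"

definition gauss_density :: "'a set \<Rightarrow> ('a \<Rightarrow> 'a \<Rightarrow> real) \<Rightarrow> ('a \<Rightarrow> real) \<Rightarrow> real" where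
  "gauss_density S A x =
     exp (- (1/2) * (\<Sum>i\<in>S. \<Sum>j\<in>S. x i * inv_on S A i j * x j))
     / sqrt ((2 * pi) ^ card S * det_on S A)"

definition null_law :: "'a set \<Rightarrow> ('a \<Rightarrow> real) measure" where
  "null_law V = density (PiM V (\<lambda>_. lborel)) (\<lambda>x. ennreal (\<Prod>i\<in>V. std_normal_density (x i)))"

definition alt_law :: "'a set \<Rightarrow> 'a set \<Rightarrow> ('a \<Rightarrow> 'a \<Rightarrow> real) \<Rightarrow> ('a \<Rightarrow> real) measure" where
  "alt_law V S A = density (PiM V (\<lambda>_. lborel))
      (\<lambda>x. ennreal (gauss_density S A x * (\<Prod>i\<in>V - S. std_normal_density (x i))))"

text \<open>Tests: measurable maps into {0,1}, encoded as bool (True = 1 = reject).\<close>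
definition tests :: "'a set \<Rightarrow> (('a \<Rightarrow> real) \<Rightarrow> bool) set" where
  "tests V = {f. f \<in> measurable (PiM V (\<lambda>_. lborel)) (count_space UNIV)}"

definition bayes_risk :: "'a set \<Rightarrow> 'a set set \<Rightarrow> 'p measure \<Rightarrow> ('p \<Rightarrow> 'a \<Rightarrow> 'a \<Rightarrow> real) \<Rightarrow> ennreal" where
  "bayes_risk V C \<pi> \<Gamma> = (INF f \<in> tests V.
      emeasure (null_law V) {x \<in> space (null_law V). f x}
      + (\<Sum>S\<in>C. ennreal (1 / real (card C)) *
           (\<integral>\<^sup>+ \<phi>. emeasure (alt_law V S (\<Gamma> \<phi>)) {x \<in> space (alt_law V S (\<Gamma> \<phi>)). \<not> f x} \<partial>\<pi>)))"

definition V_term :: "'a set \<Rightarrow> 'p measure \<Rightarrow> ('p \<Rightarrow> 'a \<Rightarrow> 'a \<Rightarrow> real) \<Rightarrow> ennreal" where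
  "V_term S \<pi> \<Gamma> = (\<integral>\<^sup>+ z.
      (let B1 = inv_on S (\<Gamma> (fst z)); B2 = inv_on S (\<Gamma> (snd z));
           Q = (\<lambda>i j. B1 i j + B2 i j - (if i = j then 1 else 0))
       in if pos_def_on S Q then ennreal (sqrt (det_on S B1 * det_on S B2 / det_on S Q)) else \<infinity>)
      \<partial>(\<pi> \<Otimes>\<^sub>M \<pi>))"

end

theory Submission
  imports Defs "Jordan_Normal_Form.Determinant"
begin

text \<open>The Bayes risk of every test is at least the affinity \<open>\<integral> min f\<^sub>0 f\<close> of the null density
  \<open>f\<^sub>0\<close> and the mixture \<open>f\<close> of the alternative densities \<open>f\<^sub>S\<^sub>,\<^sub>\<phi>\<close> under the uniform prior on \<open>C\<close>
  and the prior \<open>\<pi>\<close>. Integrating a pointwise AM-GM inequality shows that this affinity is at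
  least \<open>1 - sqrt (\<chi> - 1) / 2\<close>, where \<open>\<chi> = \<integral> f\<^sup>2 / f\<^sub>0\<close>. Expanding the square, \<open>\<chi>\<close> is the average
  over pairs \<open>(S, T)\<close> in \<open>C\<close> of \<open>\<integral>\<integral> (\<integral> f\<^sub>S\<^sub>,\<^sub>\<phi>\<^sub>1 f\<^sub>T\<^sub>,\<^sub>\<phi>\<^sub>2 / f\<^sub>0) d\<pi>(\<phi>\<^sub>1) d\<pi>(\<phi>\<^sub>2)\<close>. For \<open>S \<noteq> T\<close> the sets
  are disjoint, the integrand factorises over disjoint coordinates and the inner integral is 1;
  for \<open>S = T\<close> it is a Gaussian integral whose value is the integrand of \<open>V\<^sub>S\<close>. Hence
  \<open>\<chi> - 1 \<le> (\<Sum>\<^sub>S V\<^sub>S) / |C|\<^sup>2\<close>.\<close>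

section \<open>Determinants of principal submatrices\<close>

lemma det_on_reindex:
  assumes f: "bij_betw f A B" and fin: "finite A"
  shows "det_on A (\<lambda>i j. M (f i) (f j)) = det_on B M"
proof -
  have injf: "inj_on f A" using f by (auto simp: bij_betw_def)
  define g where "g = inv_into A f"
  have g: "bij_betw g B A" unfolding g_def using f by (rule bij_betw_inv_into)
  have gf: "\<And>x. x \<in> A \<Longrightarrow> g (f x) = x" unfolding g_def using injf by auto
  have fg: "\<And>x. x \<in> B \<Longrightarrow> f (g x) = x" unfolding g_def using f
    by (simp add: bij_betw_inv_into_right)
  have bij: "bij_betw (map_permutation A f) {p. p permutes A} {q. q permutes B}"
  proof (rule bij_betw_byWitness[where f' = "map_permutation B g"])
    show "\<forall>a\<in>{p. p permutes A}. map_permutation B g (map_permutation A f a) = a"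
      using map_permutation_compose_inv[OF f _ gf] by auto
    show "\<forall>a\<in>{q. q permutes B}. map_permutation A f (map_permutation B g a) = a"
      using map_permutation_compose_inv[OF g _ fg] by auto
    show "map_permutation A f ` {p. p permutes A} \<subseteq> {q. q permutes B}"
      using map_permutation_permutes[OF f] by auto
    show "map_permutation B g ` {q. q permutes B} \<subseteq> {p. p permutes A}"
      using map_permutation_permutes[OF g] by auto
  qed
  have term_eq: "of_int (sign (map_permutation A f p)) * (\<Prod>j\<in>B. M j (map_permutation A f p j))
      = of_int (sign p) * (\<Prod>i\<in>A. M (f i) (f (p i)))" if p: "p permutes A" for p
  proof -
    have "(\<Prod>j\<in>B. M j (map_permutation A f p j)) = (\<Prod>i\<in>A. M (f i) (map_permutation A f p (f i)))"
      by (rule prod.reindex_bij_betw[OF f, symmetric])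
    also have "\<dots> = (\<Prod>i\<in>A. M (f i) (f (p i)))"
      by (rule prod.cong[OF refl]) (simp add: map_permutation_apply[OF injf])
    finally show ?thesis using sign_map_permutation[OF injf p fin] by simp
  qed
  have "det_on B M = (\<Sum>p | p permutes A. of_int (sign (map_permutation A f p)) *
            (\<Prod>j\<in>B. M j (map_permutation A f p j)))"
    unfolding det_on_def by (rule sum.reindex_bij_betw[OF bij, symmetric])
  also have "\<dots> = det_on A (\<lambda>i j. M (f i) (f j))"
    unfolding det_on_def by (rule sum.cong) (auto simp: term_eq)
  finally show ?thesis ..
qed

lemma det_on_cong:
  assumes "\<And>i j. i \<in> S \<Longrightarrow> j \<in> S \<Longrightarrow> A i j = B i j"
  shows "det_on S A = det_on S B"
  unfolding det_on_def
  by (intro sum.cong refl arg_cong2[where f="(*)"] prod.cong)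
     (auto simp: permutes_in_image assms)

lemma det_on_empty [simp]: "det_on {} A = 1"
  unfolding det_on_def by (simp add: permutes_empty)

text \<open>A finite index set \<open>S\<close> is enumerated by \<open>{0..<card S}\<close> to transfer determinant facts
  from \<open>Jordan_Normal_Form\<close>.\<close>

definition enum_of :: "'a set \<Rightarrow> nat \<Rightarrow> 'a" where
  "enum_of S = (SOME e. bij_betw e {0..<card S} S)"

definition index_of :: "'a set \<Rightarrow> 'a \<Rightarrow> nat" where
  "index_of S = inv_into {0..<card S} (enum_of S)"

lemma bij_betw_enum_of: "finite S \<Longrightarrow> bij_betw (enum_of S) {0..<card S} S"
  unfolding enum_of_def using ex_bij_betw_nat_finite[of S] by (rule someI_ex)

lemma index_of_less: "finite S \<Longrightarrow> i \<in> S \<Longrightarrow> index_of S i < card S"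
  using bij_betw_enum_of[of S] unfolding index_of_def
  by (metis atLeastLessThan_iff bij_betw_def inv_into_into)

lemma enum_of_index_of: "finite S \<Longrightarrow> i \<in> S \<Longrightarrow> enum_of S (index_of S i) = i"
  using bij_betw_enum_of[of S] unfolding index_of_def by (simp add: bij_betw_inv_into_right)

lemma index_of_enum_of: "finite S \<Longrightarrow> k < card S \<Longrightarrow> index_of S (enum_of S k) = k"
  using bij_betw_enum_of[of S] unfolding index_of_def by (simp add: bij_betw_inv_into_left)

definition mat_on :: "'a set \<Rightarrow> ('a \<Rightarrow> 'a \<Rightarrow> real) \<Rightarrow> real mat" where
  "mat_on S A = mat (card S) (card S) (\<lambda>(i, j). A (enum_of S i) (enum_of S j))"

lemma mat_on_carrier [simp]: "mat_on S A \<in> carrier_mat (card S) (card S)"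
  unfolding mat_on_def by simp

lemma mat_on_dim [simp]: "dim_row (mat_on S A) = card S" "dim_col (mat_on S A) = card S"
  unfolding mat_on_def by simp_all

lemma mat_on_index [simp]:
  "i < card S \<Longrightarrow> j < card S \<Longrightarrow> mat_on S A $$ (i, j) = A (enum_of S i) (enum_of S j)"
  unfolding mat_on_def by simp

lemma det_mat_on: "finite S \<Longrightarrow> det (mat_on S A) = det_on S A"
  unfolding det_def'[OF mat_on_carrier]
  by (subst det_on_reindex[OF bij_betw_enum_of, symmetric], assumption)
     (auto simp: det_on_def permutes_in_image intro!: sum.cong prod.cong arg_cong2[where f="(*)"])

definition mat_mult_on :: "'a set \<Rightarrow> ('a \<Rightarrow> 'a \<Rightarrow> real) \<Rightarrow> ('a \<Rightarrow> 'a \<Rightarrow> real) \<Rightarrow> 'a \<Rightarrow> 'a \<Rightarrow> real" where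
  "mat_mult_on S A B = (\<lambda>i j. \<Sum>k\<in>S. A i k * B k j)"

lemma mat_on_mult: "finite S \<Longrightarrow> mat_on S (mat_mult_on S A B) = mat_on S A * mat_on S B"
  by (rule eq_matI)
     (auto simp: mat_mult_on_def scalar_prod_def intro: sum.reindex_bij_betw[OF bij_betw_enum_of, symmetric])

lemma det_on_mult: "finite S \<Longrightarrow> det_on S (mat_mult_on S A B) = det_on S A * det_on S B"
  by (simp flip: det_mat_on add: mat_on_mult det_mult[OF mat_on_carrier mat_on_carrier])

lemma det_on_one: "finite S \<Longrightarrow> det_on S (\<lambda>i j. if i = j then 1 else 0) = 1"
proof -
  assume fin: "finite S"
  have "mat_on S (\<lambda>i j. if i = j then 1 else 0) = 1\<^sub>m (card S)"
    by (rule eq_matI) (auto simp: fin dest: arg_cong[where f = "index_of S"] simp: index_of_enum_of)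
  thus ?thesis using det_mat_on[OF fin, of "\<lambda>i j. if i = j then 1 else 0"] by simp
qed

lemma det_on_transpose:
  assumes fin: "finite S" shows "det_on S (\<lambda>i j. A j i) = det_on S A"
proof -
  have "mat_on S (\<lambda>i j. A j i) = transpose_mat (mat_on S A)"
    by (rule eq_matI) simp_all
  hence "det (mat_on S (\<lambda>i j. A j i)) = det (mat_on S A)"
    by (simp add: det_transpose[OF mat_on_carrier])
  thus ?thesis by (simp only: det_mat_on[OF fin])
qed

lemma permutes_Diff_singleton_iff:
  assumes a: "a \<in> S" shows "p permutes (S - {a}) \<longleftrightarrow> p permutes S \<and> p a = a"
proof
  assume p: "p permutes (S - {a})"
  show "p permutes S \<and> p a = a"
    using permutes_subset[OF p, of S] permutes_not_in[OF p, of a] by auto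
next
  assume p: "p permutes S \<and> p a = a"
  show "p permutes (S - {a})"
    by (rule permutes_superset[of p S]) (use p in auto)
qed

lemma det_on_row_unit:
  assumes fin: "finite S" and a: "a \<in> S" and row: "\<And>j. j \<in> S \<Longrightarrow> j \<noteq> a \<Longrightarrow> A a j = 0"
  shows "det_on S A = A a a * det_on (S - {a}) A"
proof -
  have vanish: "of_int (sign p) * (\<Prod>i\<in>S. A i (p i)) = 0" if "p permutes S" "p a \<noteq> a" for p
  proof -
    have "A a (p a) = 0" using that a row[of "p a"] by (simp add: permutes_in_image)
    thus ?thesis using prod_zero[OF fin, of "\<lambda>i. A i (p i)"] a by auto
  qed
  have "det_on S A = (\<Sum>p\<in>{p. p permutes S \<and> p a = a}. of_int (sign p) * (\<Prod>i\<in>S. A i (p i)))"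
    unfolding det_on_def
  proof (rule sum.mono_neutral_right)
    show "finite {p. p permutes S}" using fin by (simp add: finite_permutations)
  qed (use vanish in auto)
  also have "\<dots> = (\<Sum>p\<in>{p. p permutes (S - {a})}. A a a * (of_int (sign p) * (\<Prod>i\<in>S - {a}. A i (p i))))"
  proof (rule sum.cong)
    fix p assume "p \<in> {p. p permutes (S - {a})}"
    hence "p a = a" using permutes_Diff_singleton_iff[OF a] by auto
    thus "of_int (sign p) * (\<Prod>i\<in>S. A i (p i)) = A a a * (of_int (sign p) * (\<Prod>i\<in>S - {a}. A i (p i)))"
      using prod.remove[OF fin a, of "\<lambda>i. A i (p i)"] by simp
  qed (use permutes_Diff_singleton_iff[OF a] in auto)
  also have "\<dots> = A a a * det_on (S - {a}) A"
    unfolding det_on_def by (simp add: sum_distrib_left)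
  finally show ?thesis .
qed

lemma det_on_col_unit:
  assumes fin: "finite S" and a: "a \<in> S" and col: "\<And>i. i \<in> S \<Longrightarrow> i \<noteq> a \<Longrightarrow> A i a = 0"
  shows "det_on S A = A a a * det_on (S - {a}) A"
proof -
  have "det_on S (\<lambda>i j. A j i) = A a a * det_on (S - {a}) (\<lambda>i j. A j i)"
    by (rule det_on_row_unit[OF fin a]) (rule col)
  thus ?thesis using det_on_transpose[OF fin, of A] det_on_transpose[of "S - {a}" A] fin by simp
qed

lemma det_on_schur_complement:
  assumes fin: "finite S" and a: "a \<in> S" and q: "A a a \<noteq> 0"
  shows "det_on S A = A a a * det_on (S - {a}) (\<lambda>i j. A i j - A i a * A a j / A a a)"
proof -
  text \<open>Eliminate column \<open>a\<close> below the pivot by a unit lower triangular factor \<open>E\<close>.\<close>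
  define E where "E = (\<lambda>i j. (if i = j then 1 else 0) - (if j = a \<and> i \<noteq> a then A i a / A a a else (0::real)))"
  have EA: "mat_mult_on S E A i j = A i j - (if i \<noteq> a then A i a / A a a * A a j else 0)" if "i \<in> S" for i j
  proof -
    have "(\<lambda>k. E i k * A k j) = (\<lambda>k. (if k = i then A i j else 0) - (if k = a then (if i \<noteq> a then A i a / A a a * A a j else 0) else 0))"
      by (auto simp: E_def fun_eq_iff)
    hence "mat_mult_on S E A i j = (\<Sum>k\<in>S. (if k = i then A i j else 0))
        - (\<Sum>k\<in>S. (if k = a then (if i \<noteq> a then A i a / A a a * A a j else 0) else 0))"
      unfolding mat_mult_on_def by (simp only: sum_subtractf[symmetric])
    thus ?thesis using fin that a by (simp add: sum.delta)
  qed
  have "det_on S E = E a a * det_on (S - {a}) E"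
    by (rule det_on_row_unit[OF fin a]) (simp add: E_def)
  also have "det_on (S - {a}) E = det_on (S - {a}) (\<lambda>i j. if i = j then 1 else 0)"
    by (rule det_on_cong) (auto simp: E_def)
  finally have det_E: "det_on S E = 1" using det_on_one[of "S - {a}"] fin by (simp add: E_def)
  have "det_on S (mat_mult_on S E A) = mat_mult_on S E A a a * det_on (S - {a}) (mat_mult_on S E A)"
    by (rule det_on_col_unit[OF fin a]) (use q in \<open>simp add: EA\<close>)
  also have "\<dots> = A a a * det_on (S - {a}) (\<lambda>i j. A i j - A i a * A a j / A a a)"
    using a by (auto intro!: det_on_cong simp: EA)
  finally show ?thesis using det_on_mult[OF fin, of E A] det_E by simp
qed

section \<open>Inverses of principal submatrices\<close>

text \<open>\<open>inv_on\<close> is defined by choice; the adjugate formula is an explicit witness, which also shows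
  that the inverse depends measurably on the matrix entries.\<close>

definition adj_inv_on :: "'a set \<Rightarrow> ('a \<Rightarrow> 'a \<Rightarrow> real) \<Rightarrow> 'a \<Rightarrow> 'a \<Rightarrow> real" where
  "adj_inv_on S A = (\<lambda>i j. if i \<in> S \<and> j \<in> S
     then adj_mat (mat_on S A) $$ (index_of S i, index_of S j) / det_on S A else 0)"

lemma adj_mat_on_mult_left:
  assumes fin: "finite S" and i: "i \<in> S" and j: "j \<in> S"
  shows "(\<Sum>k\<in>S. adj_mat (mat_on S A) $$ (index_of S i, index_of S k) * A k j)
       = (if i = j then det_on S A else 0)"
proof -
  let ?n = "card S" and ?B = "adj_mat (mat_on S A)"
  have B: "?B \<in> carrier_mat ?n ?n" by (rule adj_mat(1)[OF mat_on_carrier])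
  have li: "index_of S i < ?n" and lj: "index_of S j < ?n"
    using index_of_less[OF fin i] index_of_less[OF fin j] by auto
  have "(\<Sum>k\<in>S. ?B $$ (index_of S i, index_of S k) * A k j)
      = (\<Sum>k\<in>{0..<?n}. ?B $$ (index_of S i, index_of S (enum_of S k)) * A (enum_of S k) j)"
    by (rule sum.reindex_bij_betw[OF bij_betw_enum_of[OF fin], symmetric])
  also have "\<dots> = (?B * mat_on S A) $$ (index_of S i, index_of S j)"
    using li lj B by (auto simp: scalar_prod_def enum_of_index_of[OF fin j] index_of_enum_of[OF fin]
        intro!: sum.cong)
  also have "\<dots> = (if i = j then det_on S A else 0)"
    using li lj by (simp add: adj_mat(3)[OF mat_on_carrier] det_mat_on[OF fin])
      (metis enum_of_index_of[OF fin i] enum_of_index_of[OF fin j])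
  finally show ?thesis .
qed

lemma adj_mat_on_mult_right:
  assumes fin: "finite S" and i: "i \<in> S" and j: "j \<in> S"
  shows "(\<Sum>k\<in>S. A i k * adj_mat (mat_on S A) $$ (index_of S k, index_of S j))
       = (if i = j then det_on S A else 0)"
proof -
  let ?n = "card S" and ?B = "adj_mat (mat_on S A)"
  have B: "?B \<in> carrier_mat ?n ?n" by (rule adj_mat(1)[OF mat_on_carrier])
  have li: "index_of S i < ?n" and lj: "index_of S j < ?n"
    using index_of_less[OF fin i] index_of_less[OF fin j] by auto
  have "(\<Sum>k\<in>S. A i k * ?B $$ (index_of S k, index_of S j))
      = (\<Sum>k\<in>{0..<?n}. A i (enum_of S k) * ?B $$ (index_of S (enum_of S k), index_of S j))"
    by (rule sum.reindex_bij_betw[OF bij_betw_enum_of[OF fin], symmetric])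
  also have "\<dots> = (mat_on S A * ?B) $$ (index_of S i, index_of S j)"
    using li lj B by (auto simp: scalar_prod_def enum_of_index_of[OF fin i] index_of_enum_of[OF fin]
        intro!: sum.cong)
  also have "\<dots> = (if i = j then det_on S A else 0)"
    using li lj by (simp add: adj_mat(2)[OF mat_on_carrier] det_mat_on[OF fin])
      (metis enum_of_index_of[OF fin i] enum_of_index_of[OF fin j])
  finally show ?thesis .
qed

lemma adj_inv_on_mult_left:
  assumes fin: "finite S" and d: "det_on S A \<noteq> 0" and i: "i \<in> S" and j: "j \<in> S"
  shows "(\<Sum>k\<in>S. adj_inv_on S A i k * A k j) = (if i = j then 1 else 0)"
proof -
  have "(\<Sum>k\<in>S. adj_inv_on S A i k * A k j) = (\<Sum>k\<in>S. adj_mat (mat_on S A) $$ (index_of S i, index_of S k) * A k j) / det_on S A"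
    unfolding sum_divide_distrib using i by (intro sum.cong) (auto simp: adj_inv_on_def)
  thus ?thesis using adj_mat_on_mult_left[OF fin i j] d by simp
qed

lemma adj_inv_on_mult_right:
  assumes fin: "finite S" and d: "det_on S A \<noteq> 0" and i: "i \<in> S" and j: "j \<in> S"
  shows "(\<Sum>k\<in>S. A i k * adj_inv_on S A k j) = (if i = j then 1 else 0)"
proof -
  have "(\<Sum>k\<in>S. A i k * adj_inv_on S A k j) = (\<Sum>k\<in>S. A i k * adj_mat (mat_on S A) $$ (index_of S k, index_of S j)) / det_on S A"
    unfolding sum_divide_distrib using j by (intro sum.cong) (auto simp: adj_inv_on_def)
  thus ?thesis using adj_mat_on_mult_right[OF fin i j] d by simp
qed

definition is_left_inv_on :: "'a set \<Rightarrow> ('a \<Rightarrow> 'a \<Rightarrow> real) \<Rightarrow> ('a \<Rightarrow> 'a \<Rightarrow> real) \<Rightarrow> bool" where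
  "is_left_inv_on S A B = ((\<forall>i\<in>S. \<forall>j\<in>S. (\<Sum>k\<in>S. B i k * A k j) = (if i = j then 1 else 0))
                        \<and> (\<forall>i j. i \<notin> S \<or> j \<notin> S \<longrightarrow> B i j = 0))"

lemma is_left_inv_on_unique:
  assumes fin: "finite S" and d: "det_on S A \<noteq> 0" and B: "is_left_inv_on S A B"
  shows "B = adj_inv_on S A"
proof (intro ext)
  fix i j
  show "B i j = adj_inv_on S A i j"
  proof (cases "i \<in> S \<and> j \<in> S")
    case False thus ?thesis using B by (auto simp: is_left_inv_on_def adj_inv_on_def)
  next
    case True
    hence i: "i \<in> S" and j: "j \<in> S" by auto
    have "(\<Sum>l\<in>S. B i l * (if l = j then 1 else 0)) = (\<Sum>l\<in>S. if l = j then B i l else 0)"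
      by (rule sum.cong) auto
    hence "B i j = (\<Sum>l\<in>S. B i l * (if l = j then 1 else 0))" using fin j by simp
    also have "\<dots> = (\<Sum>l\<in>S. B i l * (\<Sum>k\<in>S. A l k * adj_inv_on S A k j))"
      by (intro sum.cong refl) (simp add: adj_inv_on_mult_right[OF fin d _ j])
    also have "\<dots> = (\<Sum>l\<in>S. \<Sum>k\<in>S. B i l * A l k * adj_inv_on S A k j)"
      by (simp add: sum_distrib_left mult.assoc)
    also have "\<dots> = (\<Sum>k\<in>S. \<Sum>l\<in>S. B i l * A l k * adj_inv_on S A k j)"
      by (rule sum.swap)
    also have "\<dots> = (\<Sum>k\<in>S. (\<Sum>l\<in>S. B i l * A l k) * adj_inv_on S A k j)"
      by (simp add: sum_distrib_right)
    also have "\<dots> = (\<Sum>k\<in>S. (if i = k then 1 else 0) * adj_inv_on S A k j)"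
      using B i by (intro sum.cong refl) (auto simp: is_left_inv_on_def)
    also have "\<dots> = (\<Sum>k\<in>S. if i = k then adj_inv_on S A k j else 0)"
      by (rule sum.cong) auto
    also have "\<dots> = adj_inv_on S A i j" using fin i by simp
    finally show ?thesis .
  qed
qed

lemma inv_on_eq_adj_inv_on:
  assumes fin: "finite S" and d: "det_on S A \<noteq> 0"
  shows "inv_on S A = adj_inv_on S A"
proof -
  have "is_left_inv_on S A (adj_inv_on S A)" unfolding is_left_inv_on_def
  proof (intro conjI ballI allI impI)
    fix i j assume "i \<in> S" "j \<in> S"
    thus "(\<Sum>k\<in>S. adj_inv_on S A i k * A k j) = (if i = j then 1 else 0)" by (rule adj_inv_on_mult_left[OF fin d])
  next
    fix i j assume "i \<notin> S \<or> j \<notin> S"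
    thus "adj_inv_on S A i j = 0" unfolding adj_inv_on_def by auto
  qed
  moreover have "inv_on S A = (SOME B. is_left_inv_on S A B)" unfolding inv_on_def is_left_inv_on_def by simp
  ultimately have "is_left_inv_on S A (inv_on S A)" using someI[of "is_left_inv_on S A"] by simp
  thus ?thesis by (rule is_left_inv_on_unique[OF fin d])
qed

lemma inv_on_mult_left:
  "finite S \<Longrightarrow> det_on S A \<noteq> 0 \<Longrightarrow> i \<in> S \<Longrightarrow> j \<in> S \<Longrightarrow>
    (\<Sum>k\<in>S. inv_on S A i k * A k j) = (if i = j then 1 else 0)"
  by (simp add: inv_on_eq_adj_inv_on adj_inv_on_mult_left)

lemma inv_on_mult_right:
  "finite S \<Longrightarrow> det_on S A \<noteq> 0 \<Longrightarrow> i \<in> S \<Longrightarrow> j \<in> S \<Longrightarrow>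
    (\<Sum>k\<in>S. A i k * inv_on S A k j) = (if i = j then 1 else 0)"
  by (simp add: inv_on_eq_adj_inv_on adj_inv_on_mult_right)

lemma inv_on_outside: "finite S \<Longrightarrow> det_on S A \<noteq> 0 \<Longrightarrow> i \<notin> S \<or> j \<notin> S \<Longrightarrow> inv_on S A i j = 0"
  by (auto simp: inv_on_eq_adj_inv_on adj_inv_on_def)

lemma det_on_inv_on:
  assumes fin: "finite S" and d: "det_on S A \<noteq> 0"
  shows "det_on S (inv_on S A) * det_on S A = 1"
proof -
  have "det_on S (mat_mult_on S (inv_on S A) A) = det_on S (\<lambda>i j. if i = j then 1 else 0)"
    by (rule det_on_cong) (simp add: mat_mult_on_def inv_on_mult_left[OF fin d])
  thus ?thesis using det_on_mult[OF fin] det_on_one[OF fin] by simp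
qed

lemma inv_on_symmetric:
  assumes fin: "finite S" and d: "det_on S A \<noteq> 0" and sym: "\<And>i j. i \<in> S \<Longrightarrow> j \<in> S \<Longrightarrow> A i j = A j i"
  shows "inv_on S A i j = inv_on S A j i"
proof -
  have "is_left_inv_on S A (\<lambda>i j. inv_on S A j i)" unfolding is_left_inv_on_def
  proof (intro conjI ballI allI impI)
    fix i j assume i: "i \<in> S" and j: "j \<in> S"
    have "(\<Sum>k\<in>S. inv_on S A k i * A k j) = (\<Sum>k\<in>S. A j k * inv_on S A k i)"
      using j by (intro sum.cong refl) (simp add: sym)
    also have "\<dots> = (if i = j then 1 else 0)" using inv_on_mult_right[OF fin d j i] by simp
    finally show "(\<Sum>k\<in>S. inv_on S A k i * A k j) = (if i = j then 1 else 0)" .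
  next
    fix i j assume "i \<notin> S \<or> j \<notin> S"
    thus "inv_on S A j i = 0" using inv_on_outside[OF fin d] by blast
  qed
  hence "(\<lambda>i j. inv_on S A j i) = adj_inv_on S A" by (rule is_left_inv_on_unique[OF fin d])
  hence "(\<lambda>i j. inv_on S A j i) = inv_on S A" using inv_on_eq_adj_inv_on[OF fin d] by simp
  from fun_cong[OF fun_cong[OF this, of j], of i] show ?thesis by simp
qed

lemma borel_measurable_det_mat:
  assumes c: "\<And>x. G x \<in> carrier_mat n n"
    and m: "\<And>i j. i < n \<Longrightarrow> j < n \<Longrightarrow> (\<lambda>x. G x $$ (i,j)) \<in> borel_measurable M"
  shows "(\<lambda>x. Determinant.det (G x) :: real) \<in> borel_measurable M"
proof -
  have "(\<lambda>x. Determinant.det (G x)) = (\<lambda>x. \<Sum>p\<in>{p. p permutes {0..<n}}. of_int (sign p) * (\<Prod>i = 0..<n. G x $$ (i, p i)))"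
    using det_def'[OF c] by auto
  also have "\<dots> \<in> borel_measurable M"
  proof (intro borel_measurable_sum borel_measurable_times borel_measurable_const borel_measurable_prod)
    fix p i assume "p \<in> {p. p permutes {0..<n}}" "i \<in> {0..<n}"
    thus "(\<lambda>x. G x $$ (i, p i)) \<in> borel_measurable M" using m by (auto simp: permutes_in_image)
  qed
  finally show ?thesis .
qed

lemma borel_measurable_det_on:
  assumes "\<And>i j. (\<lambda>x. F x i j) \<in> borel_measurable M"
  shows "(\<lambda>x. det_on S (F x)) \<in> borel_measurable M"
  unfolding det_on_def using assms by measurable

lemma borel_measurable_adj_inv_on:
  assumes fin: "finite S" and m: "\<And>i j. (\<lambda>x. F x i j) \<in> borel_measurable M"
  shows "(\<lambda>x. adj_inv_on S (F x) i j) \<in> borel_measurable M"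
proof (cases "i \<in> S \<and> j \<in> S")
  case False
  hence "(\<lambda>x. adj_inv_on S (F x) i j) = (\<lambda>x. 0)" by (auto simp: adj_inv_on_def)
  thus ?thesis by simp
next
  case True
  hence i: "i \<in> S" and j: "j \<in> S" by auto
  let ?n = "card S"
  have li: "index_of S i < ?n" and lj: "index_of S j < ?n" using index_of_less[OF fin i] index_of_less[OF fin j] by auto
  have "(\<lambda>x. adj_inv_on S (F x) i j) = (\<lambda>x. ((-1)^(index_of S j + index_of S i) * Determinant.det (mat_delete (mat_on S (F x)) (index_of S j) (index_of S i))) / det_on S (F x))"
    using i j li lj by (simp add: adj_inv_on_def adj_mat_def cofactor_def)
  also have "\<dots> \<in> borel_measurable M"
  proof (intro borel_measurable_divide borel_measurable_times borel_measurable_const borel_measurable_det_on m)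
    show "(\<lambda>x. Determinant.det (mat_delete (mat_on S (F x)) (index_of S j) (index_of S i))) \<in> borel_measurable M"
    proof (rule borel_measurable_det_mat[where n = "?n - 1"])
      show "\<And>x. mat_delete (mat_on S (F x)) (index_of S j) (index_of S i) \<in> carrier_mat (?n - 1) (?n - 1)"
        by (rule mat_delete_carrier[OF mat_on_carrier])
      fix a b assume a: "a < ?n - 1" and b: "b < ?n - 1"
      have "(\<lambda>x. mat_delete (mat_on S (F x)) (index_of S j) (index_of S i) $$ (a, b)) =
            (\<lambda>x. F x (enum_of S (if a < index_of S j then a else Suc a)) (enum_of S (if b < index_of S i then b else Suc b)))"
        using a b by (simp add: mat_delete_def)
      also have "\<dots> \<in> borel_measurable M" using m by simp
      finally show "(\<lambda>x. mat_delete (mat_on S (F x)) (index_of S j) (index_of S i) $$ (a, b)) \<in> borel_measurable M" .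
    qed
  qed
  finally show ?thesis .
qed

section \<open>Gaussian integrals\<close>

lemma product_sigma_finite_lborel: "product_sigma_finite (\<lambda>_::'i. lborel)" by standard

definition qform :: "'a set \<Rightarrow> ('a \<Rightarrow> 'a \<Rightarrow> real) \<Rightarrow> ('a \<Rightarrow> real) \<Rightarrow> real" where
  "qform S Q x = (\<Sum>i\<in>S. \<Sum>j\<in>S. x i * Q i j * x j)"

lemma qform_cong: "(\<And>i. i \<in> S \<Longrightarrow> x i = y i) \<Longrightarrow> qform S Q x = qform S Q y"
  unfolding qform_def by (intro sum.cong refl) auto

lemma pos_def_on_iff_qform: "pos_def_on S Q \<longleftrightarrow> (\<forall>x. (\<exists>i\<in>S. x i \<noteq> 0) \<longrightarrow> 0 < qform S Q x)"
  unfolding pos_def_on_def qform_def by simp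

lemma qform_insert_complete_square:
  assumes fin: "finite F" and a: "a \<notin> F" and sym: "\<And>i. i \<in> F \<Longrightarrow> Q i a = Q a i" and q: "Q a a \<noteq> 0"
  shows "qform (insert a F) Q x = Q a a * (x a + (\<Sum>j\<in>F. Q a j * x j) / Q a a)\<^sup>2
           + qform F (\<lambda>i j. Q i j - Q i a * Q a j / Q a a) x"
proof -
  define L where "L = (\<Sum>j\<in>F. Q a j * x j)"
  have expand: "qform (insert a F) Q x = x a * Q a a * x a + (\<Sum>j\<in>F. x a * Q a j * x j)
            + (\<Sum>i\<in>F. x i * Q i a * x a) + qform F Q x"
    unfolding qform_def using fin a by (simp add: sum.distrib)
  have col: "(\<Sum>i\<in>F. x i * Q i a * x a) = x a * L"
  proof -
    have "(\<Sum>i\<in>F. x i * Q i a * x a) = (\<Sum>i\<in>F. x a * (Q a i * x i))"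
      by (rule sum.cong) (auto simp: sym)
    thus ?thesis by (simp add: L_def sum_distrib_left)
  qed
  have row: "(\<Sum>j\<in>F. x a * Q a j * x j) = x a * L"
    by (simp add: L_def sum_distrib_left mult.assoc)
  have schur: "qform F (\<lambda>i j. Q i j - Q i a * Q a j / Q a a) x = qform F Q x - L * L / Q a a"
  proof -
    have "qform F (\<lambda>i j. Q i j - Q i a * Q a j / Q a a) x
        = (\<Sum>i\<in>F. \<Sum>j\<in>F. x i * Q i j * x j - (x i * Q i a) * (Q a j * x j) / Q a a)"
      unfolding qform_def by (intro sum.cong refl) (simp add: algebra_simps)
    also have "\<dots> = qform F Q x - (\<Sum>i\<in>F. \<Sum>j\<in>F. (x i * Q i a) * (Q a j * x j)) / Q a a"
      unfolding qform_def by (simp add: sum_subtractf sum_divide_distrib)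
    also have "(\<Sum>i\<in>F. \<Sum>j\<in>F. (x i * Q i a) * (Q a j * x j)) = (\<Sum>i\<in>F. x i * Q i a) * L"
      unfolding L_def by (simp add: sum_product)
    also have "(\<Sum>i\<in>F. x i * Q i a) = L"
      unfolding L_def by (rule sum.cong) (auto simp: sym)
    finally show ?thesis .
  qed
  show ?thesis unfolding expand col row schur L_def[symmetric] using q
    by (simp add: field_simps power2_eq_square)
qed

lemma borel_measurable_component: "i \<in> S \<Longrightarrow> (\<lambda>x. x i) \<in> borel_measurable (PiM S (\<lambda>_. lborel))"
proof -
  assume i: "i \<in> S"
  have "(\<lambda>x. x i) \<in> measurable (PiM S (\<lambda>_. lborel)) lborel"
    by (rule measurable_component_singleton[OF i])
  thus ?thesis by (simp add: measurable_lborel2)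
qed

lemma borel_measurable_qform: "S \<subseteq> I \<Longrightarrow> (\<lambda>x. qform S Q x) \<in> borel_measurable (PiM I (\<lambda>_. lborel))"
  unfolding qform_def
  by (intro borel_measurable_sum borel_measurable_times borel_measurable_const borel_measurable_component) auto

lemma nn_integral_normal_density: "0 < \<sigma> \<Longrightarrow> (\<integral>\<^sup>+y. ennreal (normal_density \<mu> \<sigma> y) \<partial>lborel) = 1"
  by (subst nn_integral_eq_integral) (auto simp: normal_density_nonneg)

lemma nn_integral_exp_square:
  assumes q: "0 < q"
  shows "(\<integral>\<^sup>+y. ennreal (exp (-(1/2) * (q * (y + c)\<^sup>2))) \<partial>lborel) = ennreal (sqrt (2*pi/q))"
proof -
  have eq: "exp (-(1/2) * (q * (y + c)\<^sup>2)) = sqrt (2*pi/q) * normal_density (-c) (1 / sqrt q) y" for y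
  proof -
    have s: "(1 / sqrt q)\<^sup>2 = 1 / q" using q by (simp add: power_divide)
    have "normal_density (-c) (1 / sqrt q) y = 1 / sqrt (2 * pi / q) * exp (-(y + c)\<^sup>2 / (2 / q))"
      unfolding normal_density_def s by simp
    moreover have "sqrt (2*pi/q) * (1 / sqrt (2 * pi / q)) = 1" using q by simp
    moreover have "-(y + c)\<^sup>2 / (2 / q) = -(1/2) * (q * (y + c)\<^sup>2)" using q by (simp add: field_simps)
    ultimately show ?thesis by (metis mult.assoc mult_1)
  qed
  have "(\<integral>\<^sup>+y. ennreal (exp (-(1/2) * (q * (y + c)\<^sup>2))) \<partial>lborel)
      = (\<integral>\<^sup>+y. ennreal (sqrt (2*pi/q)) * ennreal (normal_density (-c) (1 / sqrt q) y) \<partial>lborel)"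
    unfolding eq using q by (intro nn_integral_cong) (simp add: ennreal_mult)
  also have "\<dots> = ennreal (sqrt (2*pi/q)) * (\<integral>\<^sup>+y. ennreal (normal_density (-c) (1 / sqrt q) y) \<partial>lborel)"
    by (rule nn_integral_cmult) simp
  also have "\<dots> = ennreal (sqrt (2*pi/q))" using q by (simp add: nn_integral_normal_density)
  finally show ?thesis .
qed

lemma pos_def_on_insert_schur:
  assumes fin: "finite F" and a: "a \<notin> F"
    and sym: "\<And>i j. i \<in> insert a F \<Longrightarrow> j \<in> insert a F \<Longrightarrow> Q i j = Q j i"
    and pd: "pos_def_on (insert a F) Q"
  shows "0 < Q a a" "pos_def_on F (\<lambda>i j. Q i j - Q i a * Q a j / Q a a)"
proof -
  have pd: "0 < qform (insert a F) Q x" if "\<exists>i\<in>insert a F. x i \<noteq> 0" for x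
    using pd that unfolding pos_def_on_iff_qform by blast
  have "qform (insert a F) Q (\<lambda>i. if i = a then 1 else 0) = (\<Sum>i\<in>insert a F. if i = a then Q a a else 0)"
    unfolding qform_def using fin
    by (intro sum.cong refl) (simp add: if_distrib sum.delta[OF finite_insert[THEN iffD2, OF fin]] cong: if_cong)
  also have "\<dots> = Q a a" using fin by simp
  finally have "qform (insert a F) Q (\<lambda>i. if i = a then 1 else 0) = Q a a" .
  thus qpos: "0 < Q a a" using pd[of "\<lambda>i. if i = a then 1 else 0"] by simp
  show "pos_def_on F (\<lambda>i j. Q i j - Q i a * Q a j / Q a a)" unfolding pos_def_on_iff_qform
  proof (intro allI impI)
    fix x :: "'a \<Rightarrow> real" assume "\<exists>i\<in>F. x i \<noteq> 0"
    then obtain i where i: "i \<in> F" "x i \<noteq> 0" by blast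
    text \<open>Choose the coordinate at \<open>a\<close> that makes the completed square vanish.\<close>
    define y where "y = x(a := - (\<Sum>j\<in>F. Q a j * x j) / Q a a)"
    have yF: "\<And>j. j \<in> F \<Longrightarrow> y j = x j" using a unfolding y_def by auto
    have "(\<Sum>j\<in>F. Q a j * y j) = (\<Sum>j\<in>F. Q a j * x j)" by (rule sum.cong) (auto simp: yF)
    hence "y a + (\<Sum>j\<in>F. Q a j * y j) / Q a a = 0" unfolding y_def using qpos by (simp add: field_simps)
    hence "qform (insert a F) Q y = qform F (\<lambda>i j. Q i j - Q i a * Q a j / Q a a) y"
      using qform_insert_complete_square[OF fin a, of Q y] sym qpos by simp
    also have "\<dots> = qform F (\<lambda>i j. Q i j - Q i a * Q a j / Q a a) x" by (rule qform_cong) (simp add: yF)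
    finally show "0 < qform F (\<lambda>i j. Q i j - Q i a * Q a j / Q a a) x"
      using pd[of y] i yF by force
  qed
qed

lemma nn_integral_gauss_insert:
  assumes fin: "finite F" and a: "a \<notin> F"
    and sym: "\<And>i j. i \<in> insert a F \<Longrightarrow> j \<in> insert a F \<Longrightarrow> Q i j = Q j i" and q: "0 < Q a a"
  shows "(\<integral>\<^sup>+x. ennreal (exp (-(1/2) * qform (insert a F) Q x)) \<partial>PiM (insert a F) (\<lambda>_. lborel))
    = (\<integral>\<^sup>+x. ennreal (exp (-(1/2) * qform F (\<lambda>i j. Q i j - Q i a * Q a j / Q a a) x)) \<partial>PiM F (\<lambda>_. lborel))
      * ennreal (sqrt (2 * pi / Q a a))"
proof -
  interpret product_sigma_finite "\<lambda>_::'a. lborel" by (rule product_sigma_finite_lborel)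
  define R where "R = (\<lambda>i j. Q i j - Q i a * Q a j / Q a a)"
  have slice: "(\<integral>\<^sup>+y. ennreal (exp (-(1/2) * qform (insert a F) Q (x(a := y)))) \<partial>lborel)
      = ennreal (exp (-(1/2) * qform F R x)) * ennreal (sqrt (2 * pi / Q a a))" for x
  proof -
    define c where "c = (\<Sum>j\<in>F. Q a j * x j) / Q a a"
    have "qform (insert a F) Q (x(a := y)) = Q a a * (y + c)\<^sup>2 + qform F R x" for y
    proof -
      have "(\<Sum>j\<in>F. Q a j * (x(a := y)) j) = (\<Sum>j\<in>F. Q a j * x j)"
        by (rule sum.cong) (use a in auto)
      moreover have "qform F R (x(a := y)) = qform F R x" by (rule qform_cong) (use a in auto)
      ultimately show ?thesis
        using qform_insert_complete_square[OF fin a, of Q "x(a := y)"] sym q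
        unfolding c_def R_def by simp
    qed
    hence "(\<integral>\<^sup>+y. ennreal (exp (-(1/2) * qform (insert a F) Q (x(a := y)))) \<partial>lborel)
        = (\<integral>\<^sup>+y. ennreal (exp (-(1/2) * qform F R x)) * ennreal (exp (-(1/2) * (Q a a * (y + c)\<^sup>2))) \<partial>lborel)"
      by (intro nn_integral_cong) (simp add: ennreal_mult[symmetric] exp_add[symmetric] algebra_simps)
    also have "\<dots> = ennreal (exp (-(1/2) * qform F R x))
        * (\<integral>\<^sup>+y. ennreal (exp (-(1/2) * (Q a a * (y + c)\<^sup>2))) \<partial>lborel)"
      by (rule nn_integral_cmult) simp
    also have "\<dots> = ennreal (exp (-(1/2) * qform F R x)) * ennreal (sqrt (2 * pi / Q a a))"
      unfolding nn_integral_exp_square[OF q] ..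
    finally show ?thesis .
  qed
  have "(\<lambda>x. ennreal (exp (-(1/2) * qform (insert a F) Q x))) \<in> borel_measurable (PiM (insert a F) (\<lambda>_. lborel))"
    using borel_measurable_qform[OF order_refl] by measurable
  hence "(\<integral>\<^sup>+x. ennreal (exp (-(1/2) * qform (insert a F) Q x)) \<partial>PiM (insert a F) (\<lambda>_. lborel))
      = (\<integral>\<^sup>+x. (\<integral>\<^sup>+y. ennreal (exp (-(1/2) * qform (insert a F) Q (x(a := y)))) \<partial>lborel) \<partial>PiM F (\<lambda>_. lborel))"
    by (rule product_nn_integral_insert[OF fin a])
  also have "\<dots> = (\<integral>\<^sup>+x. ennreal (exp (-(1/2) * qform F R x)) * ennreal (sqrt (2 * pi / Q a a)) \<partial>PiM F (\<lambda>_. lborel))"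
    by (simp only: slice)
  also have "\<dots> = (\<integral>\<^sup>+x. ennreal (exp (-(1/2) * qform F R x)) \<partial>PiM F (\<lambda>_. lborel)) * ennreal (sqrt (2 * pi / Q a a))"
    by (rule nn_integral_multc) (use borel_measurable_qform[OF order_refl] in measurable)
  finally show ?thesis unfolding R_def .
qed

lemma gaussian_integral:
  assumes "finite S" and "\<forall>i\<in>S. \<forall>j\<in>S. Q i j = Q j i" and "pos_def_on S Q"
  shows "0 < det_on S Q \<and>
    (\<integral>\<^sup>+x. ennreal (exp (-(1/2) * qform S Q x)) \<partial>PiM S (\<lambda>_. lborel)) = ennreal (sqrt ((2*pi)^card S / det_on S Q))"
  using assms
proof (induction S arbitrary: Q rule: finite_induct)
  case empty
  show ?case by (simp add: qform_def PiM_empty nn_integral_count_space_finite)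
next
  case (insert a F Q)
  define R where "R = (\<lambda>i j. Q i j - Q i a * Q a j / Q a a)"
  have sym: "\<And>i j. i \<in> insert a F \<Longrightarrow> j \<in> insert a F \<Longrightarrow> Q i j = Q j i"
    using insert.prems(1) by blast
  note schur = pos_def_on_insert_schur[OF insert.hyps, of Q, OF sym insert.prems(2), folded R_def]
  have "\<forall>i\<in>F. \<forall>j\<in>F. R i j = R j i"
    unfolding R_def using sym by (simp add: mult.commute)
  with insert.IH schur(2) have R: "0 < det_on F R"
    "(\<integral>\<^sup>+x. ennreal (exp (-(1/2) * qform F R x)) \<partial>PiM F (\<lambda>_. lborel)) = ennreal (sqrt ((2*pi)^card F / det_on F R))"
    by auto
  have det: "det_on (insert a F) Q = Q a a * det_on F R"
    using det_on_schur_complement[of "insert a F" a Q] insert.hyps schur(1) by (simp add: R_def)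
  have "sqrt ((2*pi)^card F / det_on F R) * sqrt (2 * pi / Q a a)
      = sqrt ((2*pi)^card (insert a F) / det_on (insert a F) Q)"
    unfolding det using insert.hyps by (simp add: real_sqrt_mult[symmetric] field_simps)
  thus ?case
    using nn_integral_gauss_insert[OF insert.hyps, of Q, OF sym schur(1)] R schur(1)
    by (simp add: det R_def[symmetric] ennreal_mult[symmetric])
qed

section \<open>Covariance matrices\<close>

lemma qform_zero_extend:
  assumes fin: "finite V" and S: "S \<subseteq> V"
  shows "qform V A (\<lambda>i. if i \<in> S then x i else 0) = qform S A x"
proof -
  let ?x = "\<lambda>i. if i \<in> S then x i else 0"
  have inner: "(\<Sum>j\<in>V. ?x i * A i j * ?x j) = (\<Sum>j\<in>S. ?x i * A i j * ?x j)" for i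
    by (rule sum.mono_neutral_right) (use fin S in auto)
  have "qform V A ?x = (\<Sum>i\<in>V. \<Sum>j\<in>S. ?x i * A i j * ?x j)" unfolding qform_def inner ..
  also have "\<dots> = (\<Sum>i\<in>S. \<Sum>j\<in>S. ?x i * A i j * ?x j)"
    by (rule sum.mono_neutral_right) (use fin S in auto)
  also have "\<dots> = qform S A x" unfolding qform_def by (intro sum.cong refl) auto
  finally show ?thesis .
qed

lemma covariance_qform_nonneg:
  assumes "covariance_matrix V A" "finite V" "S \<subseteq> V"
  shows "0 \<le> qform S A x"
proof -
  have "\<forall>x. 0 \<le> (\<Sum>i\<in>V. \<Sum>j\<in>V. x i * A i j * x j)"
    using assms(1) unfolding covariance_matrix_def by blast
  from spec[OF this, of "\<lambda>i. if i \<in> S then x i else 0"]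
  have "0 \<le> qform V A (\<lambda>i. if i \<in> S then x i else 0)" unfolding qform_def .
  thus ?thesis using qform_zero_extend[OF assms(2,3)] by simp
qed

lemma covariance_symmetric:
  assumes "covariance_matrix V A" "S \<subseteq> V" "i \<in> S" "j \<in> S"
  shows "A i j = A j i"
  using assms unfolding covariance_matrix_def by blast

lemma qform_add: "qform S A (\<lambda>i. x i + y i) = qform S A x + (\<Sum>i\<in>S. \<Sum>j\<in>S. y i * A i j * x j)
          + (\<Sum>i\<in>S. \<Sum>j\<in>S. x i * A i j * y j) + qform S A y"
proof -
  have "qform S A (\<lambda>i. x i + y i) = (\<Sum>i\<in>S. \<Sum>j\<in>S. x i * A i j * x j + y i * A i j * x j + x i * A i j * y j + y i * A i j * y j)"
    unfolding qform_def by (intro sum.cong refl) (simp add: algebra_simps)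
  thus ?thesis unfolding qform_def by (simp only: sum.distrib)
qed

lemma qform_add_unit:
  assumes fin: "finite S" and sym: "\<And>i j. i \<in> S \<Longrightarrow> j \<in> S \<Longrightarrow> A i j = A j i" and k: "k \<in> S"
  shows "qform S A (\<lambda>i. x i + (if i = k then t else 0))
    = qform S A x + 2 * t * (\<Sum>j\<in>S. A k j * x j) + t^2 * A k k"
proof -
  let ?d = "\<lambda>i. if i = k then t else (0::real)"
  have "(\<Sum>i\<in>S. \<Sum>j\<in>S. ?d i * A i j * x j) = t * (\<Sum>j\<in>S. A k j * x j)"
  proof -
    have "(\<Sum>j\<in>S. ?d i * A i j * x j) = (if i = k then t * (\<Sum>j\<in>S. A k j * x j) else 0)" for i
      by (auto simp: sum_distrib_left mult.assoc)
    thus ?thesis using fin k by simp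
  qed
  moreover have "(\<Sum>i\<in>S. \<Sum>j\<in>S. x i * A i j * ?d j) = t * (\<Sum>j\<in>S. A k j * x j)"
  proof -
    have "(\<Sum>j\<in>S. x i * A i j * ?d j) = x i * A i k * t" if "i \<in> S" for i
      using fin k by (simp add: if_distrib cong: if_cong)
    hence "(\<Sum>i\<in>S. \<Sum>j\<in>S. x i * A i j * ?d j) = (\<Sum>i\<in>S. t * (A k i * x i))"
      by (intro sum.cong refl) (simp add: sym k)
    thus ?thesis by (simp add: sum_distrib_left)
  qed
  moreover have "qform S A ?d = t^2 * A k k"
  proof -
    have "(\<Sum>j\<in>S. ?d i * A i j * ?d j) = (if i = k then t * A k k * t else 0)" for i
      using fin k by (auto simp: if_distrib cong: if_cong)
    thus ?thesis using fin k unfolding qform_def by (simp add: power2_eq_square)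
  qed
  ultimately show ?thesis using qform_add[of S A x ?d] by simp
qed

lemma linear_coeff_eq_0_if_quadratic_nonneg:
  fixes b c :: real
  assumes nonneg: "\<And>t. 0 \<le> 2 * t * b + t^2 * c"
  shows "b = 0"
proof -
  define D where "D = \<bar>c\<bar> + 1"
  have D: "0 < D" unfolding D_def by simp
  have "0 \<le> D^2 * (2 * (- b / D) * b + (- b / D)^2 * c)" using nonneg[of "- b / D"] by simp
  also have "\<dots> = - 2 * b^2 * D + b^2 * c"
    using D by (simp add: field_simps power2_eq_square)
  also have "\<dots> \<le> - 2 * b^2 * D + b^2 * (D - 1)"
    unfolding D_def by (intro add_left_mono mult_left_mono) auto
  finally have "b^2 * (D + 1) \<le> 0" by (simp add: algebra_simps)
  hence "b^2 \<le> 0" using D by (simp add: mult_le_0_iff)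
  thus ?thesis by simp
qed

lemma qform_psd_zero_kernel:
  assumes fin: "finite S" and sym: "\<And>i j. i \<in> S \<Longrightarrow> j \<in> S \<Longrightarrow> A i j = A j i"
    and psd: "\<And>y. 0 \<le> qform S A y" and z: "qform S A x = 0" and k: "k \<in> S"
  shows "(\<Sum>j\<in>S. A k j * x j) = 0"
proof (rule linear_coeff_eq_0_if_quadratic_nonneg)
  fix t
  show "0 \<le> 2 * t * (\<Sum>j\<in>S. A k j * x j) + t\<^sup>2 * A k k"
    using psd[of "\<lambda>i. x i + (if i = k then t else 0)"] by (simp add: qform_add_unit[OF fin sym k] z)
qed

lemma inv_on_mult_left_vec:
  assumes fin: "finite S" and d: "det_on S A \<noteq> 0" and i: "i \<in> S"
  shows "(\<Sum>l\<in>S. inv_on S A i l * (\<Sum>k\<in>S. A l k * x k)) = x i"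
proof -
  have "(\<Sum>l\<in>S. inv_on S A i l * (\<Sum>k\<in>S. A l k * x k)) = (\<Sum>l\<in>S. \<Sum>k\<in>S. inv_on S A i l * A l k * x k)"
    by (simp add: sum_distrib_left mult.assoc)
  also have "\<dots> = (\<Sum>k\<in>S. \<Sum>l\<in>S. inv_on S A i l * A l k * x k)" by (rule sum.swap)
  also have "\<dots> = (\<Sum>k\<in>S. (\<Sum>l\<in>S. inv_on S A i l * A l k) * x k)" by (simp add: sum_distrib_right)
  also have "\<dots> = (\<Sum>k\<in>S. if i = k then x k else 0)"
    by (intro sum.cong refl) (simp add: inv_on_mult_left[OF fin d i])
  also have "\<dots> = x i" using fin i by simp
  finally show ?thesis .
qed

lemma inv_on_mult_right_vec:
  assumes fin: "finite S" and d: "det_on S A \<noteq> 0" and i: "i \<in> S"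
  shows "(\<Sum>l\<in>S. A i l * (\<Sum>k\<in>S. inv_on S A l k * x k)) = x i"
proof -
  have "(\<Sum>l\<in>S. A i l * (\<Sum>k\<in>S. inv_on S A l k * x k)) = (\<Sum>l\<in>S. \<Sum>k\<in>S. A i l * inv_on S A l k * x k)"
    by (simp add: sum_distrib_left mult.assoc)
  also have "\<dots> = (\<Sum>k\<in>S. \<Sum>l\<in>S. A i l * inv_on S A l k * x k)" by (rule sum.swap)
  also have "\<dots> = (\<Sum>k\<in>S. (\<Sum>l\<in>S. A i l * inv_on S A l k) * x k)" by (simp add: sum_distrib_right)
  also have "\<dots> = (\<Sum>k\<in>S. if i = k then x k else 0)"
    by (intro sum.cong refl) (simp add: inv_on_mult_right[OF fin d i])
  also have "\<dots> = x i" using fin i by simp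
  finally show ?thesis .
qed

lemma covariance_pos_def_on:
  assumes cov: "covariance_matrix V A" and finV: "finite V" and S: "S \<subseteq> V" and d: "det_on S A \<noteq> 0"
  shows "pos_def_on S A"
  unfolding pos_def_on_iff_qform
proof (intro allI impI)
  fix x :: "'a \<Rightarrow> real" assume "\<exists>i\<in>S. x i \<noteq> 0"
  then obtain i where i: "i \<in> S" "x i \<noteq> 0" by blast
  have fin: "finite S" using finV S finite_subset by blast
  have ge: "0 \<le> qform S A x" by (rule covariance_qform_nonneg[OF cov finV S])
  show "0 < qform S A x"
  proof (rule ccontr)
    assume "\<not> 0 < qform S A x"
    hence z: "qform S A x = 0" using ge by simp
    have ker: "(\<Sum>k\<in>S. A l k * x k) = 0" if "l \<in> S" for l
      by (rule qform_psd_zero_kernel[OF fin _ _ z that]) (use covariance_symmetric[OF cov S] covariance_qform_nonneg[OF cov finV S] in auto)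
    have "x i = (\<Sum>l\<in>S. inv_on S A i l * (\<Sum>k\<in>S. A l k * x k))" using inv_on_mult_left_vec[OF fin d i(1)] by simp
    also have "\<dots> = 0" by (simp add: ker)
    finally show False using i by simp
  qed
qed

lemma covariance_inv_pos_def_on:
  assumes cov: "covariance_matrix V A" and finV: "finite V" and S: "S \<subseteq> V" and d: "det_on S A \<noteq> 0"
  shows "pos_def_on S (inv_on S A)"
  unfolding pos_def_on_iff_qform
proof (intro allI impI)
  fix x :: "'a \<Rightarrow> real" assume "\<exists>i\<in>S. x i \<noteq> 0"
  then obtain i where i: "i \<in> S" "x i \<noteq> 0" by blast
  have fin: "finite S" using finV S finite_subset by blast
  define B where "B = inv_on S A"
  define z where "z = (\<lambda>l. \<Sum>k\<in>S. B l k * x k)"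
  have Az: "(\<Sum>l\<in>S. A j l * z l) = x j" if "j \<in> S" for j
    unfolding z_def B_def by (rule inv_on_mult_right_vec[OF fin d that])
  have "qform S A z = (\<Sum>j\<in>S. z j * (\<Sum>l\<in>S. A j l * z l))"
    unfolding qform_def by (simp add: sum_distrib_left mult.assoc)
  also have "\<dots> = (\<Sum>j\<in>S. z j * x j)" by (intro sum.cong refl) (simp add: Az)
  also have "\<dots> = qform S B x"
  proof -
    have "(\<Sum>j\<in>S. z j * x j) = (\<Sum>j\<in>S. \<Sum>k\<in>S. x k * B k j * x j)"
      unfolding z_def B_def
      by (intro sum.cong refl) (simp add: sum_distrib_left sum_distrib_right inv_on_symmetric[OF fin d covariance_symmetric[OF cov S]] mult.commute mult.left_commute)
    also have "\<dots> = qform S B x" unfolding qform_def by (rule sum.swap)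
    finally show ?thesis .
  qed
  finally have eq: "qform S A z = qform S B x" .
  have "\<exists>j\<in>S. z j \<noteq> 0"
  proof (rule ccontr)
    assume "\<not> (\<exists>j\<in>S. z j \<noteq> 0)"
    hence "x i = 0" using Az[OF i(1)] by simp
    thus False using i by simp
  qed
  hence "0 < qform S A z" using covariance_pos_def_on[OF cov finV S d] unfolding pos_def_on_iff_qform by blast
  thus "0 < qform S (inv_on S A) x" using eq unfolding B_def by simp
qed

lemma covariance_det_on:
  assumes cov: "covariance_matrix V A" and finV: "finite V" and S: "S \<subseteq> V" and d: "det_on S A \<noteq> 0"
  shows "0 < det_on S (inv_on S A)" "0 < det_on S A" "det_on S (inv_on S A) * det_on S A = 1"
proof -
  have fin: "finite S" using finV S finite_subset by blast
  have symB: "\<forall>i\<in>S. \<forall>j\<in>S. inv_on S A i j = inv_on S A j i"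
    using inv_on_symmetric[OF fin d covariance_symmetric[OF cov S]] by blast
  from gaussian_integral[OF fin symB covariance_inv_pos_def_on[OF cov finV S d]]
  show p: "0 < det_on S (inv_on S A)" by blast
  show e: "det_on S (inv_on S A) * det_on S A = 1" by (rule det_on_inv_on[OF fin d])
  have "det_on S A = 1 / det_on S (inv_on S A)" using e p by (simp add: field_simps)
  thus "0 < det_on S A" using p by simp
qed

section \<open>Gaussian densities\<close>

lemma gauss_density_qform: "gauss_density S A x = exp (-(1/2) * qform S (inv_on S A) x) / sqrt ((2*pi)^card S * det_on S A)"
  unfolding gauss_density_def qform_def by simp

lemma gauss_density_nonneg:
  assumes "covariance_matrix V A" "finite V" "S \<subseteq> V" "det_on S A \<noteq> 0"
  shows "0 \<le> gauss_density S A x"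
  using covariance_det_on(2)[OF assms] unfolding gauss_density_qform by simp

lemma nn_integral_gauss_density:
  assumes cov: "covariance_matrix V A" and finV: "finite V" and S: "S \<subseteq> V" and d: "det_on S A \<noteq> 0"
  shows "(\<integral>\<^sup>+x. ennreal (gauss_density S A x) \<partial>PiM S (\<lambda>_. lborel)) = 1"
proof -
  have fin: "finite S" using finV S finite_subset by blast
  have symB: "\<forall>i\<in>S. \<forall>j\<in>S. inv_on S A i j = inv_on S A j i"
    using inv_on_symmetric[OF fin d covariance_symmetric[OF cov S]] by blast
  note G = gaussian_integral[OF fin symB covariance_inv_pos_def_on[OF cov finV S d]]
  note D = covariance_det_on[OF cov finV S d]
  define c where "c = 1 / sqrt ((2*pi)^card S * det_on S A)"
  have c: "0 \<le> c" unfolding c_def using D by simp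
  have "(\<integral>\<^sup>+x. ennreal (gauss_density S A x) \<partial>PiM S (\<lambda>_. lborel))
      = (\<integral>\<^sup>+x. ennreal c * ennreal (exp (-(1/2) * qform S (inv_on S A) x)) \<partial>PiM S (\<lambda>_. lborel))"
  proof (intro nn_integral_cong)
    fix x :: "'a \<Rightarrow> real"
    have "gauss_density S A x = c * exp (-(1/2) * qform S (inv_on S A) x)" unfolding gauss_density_qform c_def by simp
    thus "ennreal (gauss_density S A x) = ennreal c * ennreal (exp (-(1/2) * qform S (inv_on S A) x))"
      by (simp add: ennreal_mult c)
  qed
  also have "\<dots> = ennreal c * (\<integral>\<^sup>+x. ennreal (exp (-(1/2) * qform S (inv_on S A) x)) \<partial>PiM S (\<lambda>_. lborel))"
    by (rule nn_integral_cmult) (use borel_measurable_qform[OF order_refl] in measurable)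
  also have "\<dots> = ennreal (c * sqrt ((2*pi)^card S / det_on S (inv_on S A)))"
    using G c by (simp add: ennreal_mult)
  also have "c * sqrt ((2*pi)^card S / det_on S (inv_on S A)) = 1"
  proof -
    have "det_on S (inv_on S A) = 1 / det_on S A" using D by (simp add: field_simps)
    hence "sqrt ((2*pi)^card S / det_on S (inv_on S A)) = sqrt ((2*pi)^card S * det_on S A)" by simp
    moreover have "0 < sqrt ((2*pi)^card S * det_on S A)" using D by simp
    ultimately show ?thesis unfolding c_def using D by simp
  qed
  finally show ?thesis by simp
qed

lemma nn_integral_PiM_split:
  fixes f g :: "('a \<Rightarrow> real) \<Rightarrow> ennreal"
  assumes finV: "finite V" and S: "S \<subseteq> V"
    and fm: "f \<in> borel_measurable (PiM S (\<lambda>_. lborel))" and gm: "g \<in> borel_measurable (PiM (V - S) (\<lambda>_. lborel))"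
    and fdep: "\<And>x y. (\<forall>i\<in>S. x i = y i) \<Longrightarrow> f x = f y"
    and gdep: "\<And>x y. (\<forall>i\<in>V - S. x i = y i) \<Longrightarrow> g x = g y"
  shows "(\<integral>\<^sup>+x. f x * g x \<partial>PiM V (\<lambda>_. lborel)) = (\<integral>\<^sup>+x. f x \<partial>PiM S (\<lambda>_. lborel)) * (\<integral>\<^sup>+x. g x \<partial>PiM (V - S) (\<lambda>_. lborel))"
proof -
  interpret product_sigma_finite "\<lambda>_::'a. lborel" by (rule product_sigma_finite_lborel)
  have finS: "finite S" using finV S finite_subset by blast
  have VS: "S \<union> (V - S) = V" using S by auto
  have f': "(\<lambda>x. f x) = (\<lambda>x. f (restrict x S))" by (rule ext) (rule fdep, auto)
  have g': "(\<lambda>x. g x) = (\<lambda>x. g (restrict x (V - S)))" by (rule ext) (rule gdep, auto)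
  have fmV: "f \<in> borel_measurable (PiM (S \<union> (V - S)) (\<lambda>_. lborel))"
    by (subst f') (rule measurable_compose[OF measurable_restrict_subset fm], auto)
  have gmV: "g \<in> borel_measurable (PiM (S \<union> (V - S)) (\<lambda>_. lborel))"
    by (subst g') (rule measurable_compose[OF measurable_restrict_subset gm], auto)
  have "(\<integral>\<^sup>+x. f x * g x \<partial>PiM (S \<union> (V - S)) (\<lambda>_. lborel))
      = (\<integral>\<^sup>+x. (\<integral>\<^sup>+y. f (merge S (V - S) (x, y)) * g (merge S (V - S) (x, y)) \<partial>PiM (V - S) (\<lambda>_. lborel)) \<partial>PiM S (\<lambda>_. lborel))"
    by (rule product_nn_integral_fold) (use finS finV fmV gmV in auto)
  also have "\<dots> = (\<integral>\<^sup>+x. (\<integral>\<^sup>+y. f x * g y \<partial>PiM (V - S) (\<lambda>_. lborel)) \<partial>PiM S (\<lambda>_. lborel))"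
  proof (intro nn_integral_cong)
    fix x y :: "'a \<Rightarrow> real"
    have "f (merge S (V - S) (x, y)) = f x" by (rule fdep) (auto simp: merge_def)
    moreover have "g (merge S (V - S) (x, y)) = g y" by (rule gdep) (auto simp: merge_def)
    ultimately show "f (merge S (V - S) (x, y)) * g (merge S (V - S) (x, y)) = f x * g y" by simp
  qed
  also have "\<dots> = (\<integral>\<^sup>+x. f x * (\<integral>\<^sup>+y. g y \<partial>PiM (V - S) (\<lambda>_. lborel)) \<partial>PiM S (\<lambda>_. lborel))"
    by (intro nn_integral_cong nn_integral_cmult gm)
  also have "\<dots> = (\<integral>\<^sup>+x. f x \<partial>PiM S (\<lambda>_. lborel)) * (\<integral>\<^sup>+y. g y \<partial>PiM (V - S) (\<lambda>_. lborel))"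
    by (rule nn_integral_multc[OF fm])
  finally show ?thesis unfolding VS .
qed

lemma nn_integral_std_normal_prod:
  assumes "finite W"
  shows "(\<integral>\<^sup>+x. ennreal (\<Prod>i\<in>W. std_normal_density (x i)) \<partial>PiM W (\<lambda>_. lborel)) = 1"
proof -
  interpret product_sigma_finite "\<lambda>_::'a. lborel" by (rule product_sigma_finite_lborel)
  have "(\<integral>\<^sup>+x. ennreal (\<Prod>i\<in>W. std_normal_density (x i)) \<partial>PiM W (\<lambda>_. lborel))
      = (\<integral>\<^sup>+x. (\<Prod>i\<in>W. ennreal (std_normal_density (x i))) \<partial>PiM W (\<lambda>_. lborel))"
    by (intro nn_integral_cong) (simp add: prod_ennreal)
  also have "\<dots> = (\<Prod>i\<in>W. (\<integral>\<^sup>+y. ennreal (std_normal_density y) \<partial>lborel))"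
    by (rule product_nn_integral_prod) (use assms in auto)
  also have "\<dots> = 1" by (simp add: nn_integral_normal_density)
  finally show ?thesis .
qed

definition null_density :: "'a set \<Rightarrow> ('a \<Rightarrow> real) \<Rightarrow> real" where
  "null_density V x = (\<Prod>i\<in>V. std_normal_density (x i))"

definition alt_density :: "'a set \<Rightarrow> 'a set \<Rightarrow> ('a \<Rightarrow> 'a \<Rightarrow> real) \<Rightarrow> ('a \<Rightarrow> real) \<Rightarrow> real" where
  "alt_density V S A x = gauss_density S A x * (\<Prod>i\<in>V - S. std_normal_density (x i))"

lemma null_density_pos: "0 < null_density V x"
  unfolding null_density_def by (intro prod_pos) (simp add: normal_density_pos)

lemma borel_measurable_std_normal_prod: "W \<subseteq> I \<Longrightarrow> (\<lambda>x. \<Prod>i\<in>W. std_normal_density (x i)) \<in> borel_measurable (PiM I (\<lambda>_. lborel))"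
  by (intro borel_measurable_prod measurable_compose[OF borel_measurable_component borel_measurable_normal_density]) auto

lemma borel_measurable_gauss_density: "S \<subseteq> I \<Longrightarrow> (\<lambda>x. gauss_density S A x) \<in> borel_measurable (PiM I (\<lambda>_. lborel))"
  unfolding gauss_density_qform using borel_measurable_qform[of S I "inv_on S A"] by measurable

lemma gauss_density_cong: "(\<forall>i\<in>S. x i = y i) \<Longrightarrow> gauss_density S A x = gauss_density S A y"
  unfolding gauss_density_def by (simp cong: sum.cong)

lemma nn_integral_PiM_split_std_normal:
  fixes f :: "('a \<Rightarrow> real) \<Rightarrow> ennreal"
  assumes finV: "finite V" and S: "S \<subseteq> V" and f: "f \<in> borel_measurable (PiM S (\<lambda>_. lborel))"
    and f_cong: "\<And>x y. (\<forall>i\<in>S. x i = y i) \<Longrightarrow> f x = f y"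
  shows "(\<integral>\<^sup>+x. f x * ennreal (\<Prod>i\<in>V - S. std_normal_density (x i)) \<partial>PiM V (\<lambda>_. lborel))
    = (\<integral>\<^sup>+x. f x \<partial>PiM S (\<lambda>_. lborel))"
proof -
  have "(\<integral>\<^sup>+x. f x * ennreal (\<Prod>i\<in>V - S. std_normal_density (x i)) \<partial>PiM V (\<lambda>_. lborel))
      = (\<integral>\<^sup>+x. f x \<partial>PiM S (\<lambda>_. lborel))
        * (\<integral>\<^sup>+x. ennreal (\<Prod>i\<in>V - S. std_normal_density (x i)) \<partial>PiM (V - S) (\<lambda>_. lborel))"
    using borel_measurable_std_normal_prod[of "V - S" "V - S"]
    by (intro nn_integral_PiM_split[OF finV S f] f_cong arg_cong[where f = ennreal] prod.cong) auto
  thus ?thesis using finV by (simp add: nn_integral_std_normal_prod)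
qed

lemma alt_density_cong: "S \<subseteq> V \<Longrightarrow> (\<forall>i\<in>V. x i = y i) \<Longrightarrow> alt_density V S A x = alt_density V S A y"
  unfolding alt_density_def using gauss_density_cong[of S x y A] by (auto intro!: prod.cong)

lemma alt_density_nonneg:
  assumes "covariance_matrix V A" "finite V" "S \<subseteq> V" "det_on S A \<noteq> 0"
  shows "0 \<le> alt_density V S A x"
  unfolding alt_density_def using gauss_density_nonneg[OF assms]
  by (intro mult_nonneg_nonneg prod_nonneg) auto

lemma borel_measurable_alt_density:
  "S \<subseteq> V \<Longrightarrow> (\<lambda>x. alt_density V S A x) \<in> borel_measurable (PiM V (\<lambda>_. lborel))"
  unfolding alt_density_def
  using borel_measurable_gauss_density[of S V A] borel_measurable_std_normal_prod[of "V - S" V]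
  by measurable

lemma borel_measurable_null_density:
  "(\<lambda>x. null_density V x) \<in> borel_measurable (PiM V (\<lambda>_. lborel))"
  unfolding null_density_def by (rule borel_measurable_std_normal_prod) simp

lemma nn_integral_null_density:
  "finite V \<Longrightarrow> (\<integral>\<^sup>+x. ennreal (null_density V x) \<partial>PiM V (\<lambda>_. lborel)) = 1"
  unfolding null_density_def by (rule nn_integral_std_normal_prod)

lemma null_law_eq_density: "null_law V = density (PiM V (\<lambda>_. lborel)) (\<lambda>x. ennreal (null_density V x))"
  unfolding null_law_def null_density_def ..

lemma alt_law_eq_density: "alt_law V S A = density (PiM V (\<lambda>_. lborel)) (\<lambda>x. ennreal (alt_density V S A x))"
  unfolding alt_law_def alt_density_def ..

lemma nn_integral_alt_density:
  assumes cov: "covariance_matrix V A" and finV: "finite V" and S: "S \<subseteq> V" and d: "det_on S A \<noteq> 0"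
  shows "(\<integral>\<^sup>+x. ennreal (alt_density V S A x) \<partial>PiM V (\<lambda>_. lborel)) = 1"
proof -
  have "(\<integral>\<^sup>+x. ennreal (alt_density V S A x) \<partial>PiM V (\<lambda>_. lborel))
      = (\<integral>\<^sup>+x. ennreal (gauss_density S A x) * ennreal (\<Prod>i\<in>V - S. std_normal_density (x i)) \<partial>PiM V (\<lambda>_. lborel))"
    unfolding alt_density_def using gauss_density_nonneg[OF cov finV S d]
    by (intro nn_integral_cong) (simp add: ennreal_mult prod_nonneg)
  also have "\<dots> = (\<integral>\<^sup>+x. ennreal (gauss_density S A x) \<partial>PiM S (\<lambda>_. lborel))"
    using borel_measurable_gauss_density[of S S A]
    by (intro nn_integral_PiM_split_std_normal[OF finV S]) (auto intro: gauss_density_cong arg_cong[where f = ennreal])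
  also have "\<dots> = 1" by (rule nn_integral_gauss_density[OF cov finV S d])
  finally show ?thesis .
qed

lemma std_normal_prod_eq:
  assumes "finite S"
  shows "(\<Prod>i\<in>S. std_normal_density (x i)) = (1 / sqrt (2*pi))^card S * exp (-(1/2) * (\<Sum>i\<in>S. (x i)^2))"
proof -
  have "(\<Prod>i\<in>S. std_normal_density (x i)) = (\<Prod>i\<in>S. (1 / sqrt (2*pi)) * exp (-(1/2) * (x i)^2))"
    by (intro prod.cong refl) (simp add: std_normal_density_def)
  also have "\<dots> = (1 / sqrt (2*pi))^card S * (\<Prod>i\<in>S. exp (-(1/2) * (x i)^2))"
    by (simp only: prod.distrib prod_constant)
  also have "(\<Prod>i\<in>S. exp (-(1/2) * (x i)^2)) = exp (\<Sum>i\<in>S. -(1/2) * (x i)^2)"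
    using assms by (simp add: exp_sum)
  also have "(\<Sum>i\<in>S. -(1/2) * (x i)^2) = -(1/2) * (\<Sum>i\<in>S. (x i)^2)"
    by (simp add: sum_distrib_left)
  finally show ?thesis .
qed

lemma qform_sum_minus_identity:
  assumes "finite S"
  shows "qform S (\<lambda>i j. B1 i j + B2 i j - (if i = j then 1 else 0)) x = qform S B1 x + qform S B2 x - (\<Sum>i\<in>S. (x i)^2)"
proof -
  have "qform S (\<lambda>i j. B1 i j + B2 i j - (if i = j then 1 else 0)) x
      = (\<Sum>i\<in>S. (\<Sum>j\<in>S. x i * B1 i j * x j) + (\<Sum>j\<in>S. x i * B2 i j * x j) - (\<Sum>j\<in>S. if i = j then x i * x j else 0))"
    unfolding qform_def
  proof (intro sum.cong refl)
    fix i
    have "(\<Sum>j\<in>S. x i * (B1 i j + B2 i j - (if i = j then 1 else 0)) * x j)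
        = (\<Sum>j\<in>S. x i * B1 i j * x j + x i * B2 i j * x j - (if i = j then x i * x j else 0))"
      by (intro sum.cong refl) (auto simp: algebra_simps)
    also have "\<dots> = (\<Sum>j\<in>S. x i * B1 i j * x j) + (\<Sum>j\<in>S. x i * B2 i j * x j) - (\<Sum>j\<in>S. if i = j then x i * x j else 0)"
      by (simp only: sum.distrib sum_subtractf)
    finally show "(\<Sum>j\<in>S. x i * (B1 i j + B2 i j - (if i = j then 1 else 0)) * x j)
        = (\<Sum>j\<in>S. x i * B1 i j * x j) + (\<Sum>j\<in>S. x i * B2 i j * x j) - (\<Sum>j\<in>S. if i = j then x i * x j else 0)" .
  qed
  also have "\<dots> = (\<Sum>i\<in>S. (\<Sum>j\<in>S. x i * B1 i j * x j) + (\<Sum>j\<in>S. x i * B2 i j * x j) - (x i)^2)"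
    using assms by (intro sum.cong refl) (simp add: power2_eq_square)
  also have "\<dots> = qform S B1 x + qform S B2 x - (\<Sum>i\<in>S. (x i)^2)"
    unfolding qform_def by (simp add: sum.distrib sum_subtractf)
  finally show ?thesis .
qed

lemma ennreal_mult_mult_inverse:
  "0 \<le> a \<Longrightarrow> 0 \<le> b \<Longrightarrow> 0 < p \<Longrightarrow> ennreal a * ennreal b * ennreal (1 / p) = ennreal (a * b / p)"
  by (simp flip: ennreal_mult)

lemma covariance_matrix_subset:
  assumes "covariance_matrix V A" "finite V" "W \<subseteq> V" shows "covariance_matrix W A"
  using assms(1,3) covariance_qform_nonneg[OF assms] unfolding covariance_matrix_def qform_def by blast

lemma alt_density_product_same:
  assumes cov1: "covariance_matrix V A1" and cov2: "covariance_matrix V A2" and finV: "finite V"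
    and S: "S \<subseteq> V" and d1: "det_on S A1 \<noteq> 0" and d2: "det_on S A2 \<noteq> 0"
  shows "alt_density V S A1 x * alt_density V S A2 x / null_density V x
    = exp (-(1/2) * qform S (\<lambda>i j. inv_on S A1 i j + inv_on S A2 i j - (if i = j then 1 else 0)) x)
      / sqrt ((2*pi)^card S * det_on S A1 * det_on S A2) * (\<Prod>i\<in>V - S. std_normal_density (x i))"
proof -
  have fin: "finite S" using finV S finite_subset by blast
  define P where "P = (\<Prod>i\<in>V - S. std_normal_density (x i))"
  define X where "X = (\<Sum>i\<in>S. (x i)^2)"
  define e1 where "e1 = exp (-(1/2) * qform S (inv_on S A1) x)"
  define e2 where "e2 = exp (-(1/2) * qform S (inv_on S A2) x)"
  have P: "0 < P" unfolding P_def by (intro prod_pos) (simp add: normal_density_pos)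
  have D: "0 < det_on S A1" "0 < det_on S A2"
    using covariance_det_on(2)[OF cov1 finV S d1] covariance_det_on(2)[OF cov2 finV S d2] .
  have null: "null_density V x = (1 / sqrt (2*pi))^card S * exp (-(1/2) * X) * P"
    unfolding null_density_def P_def X_def using prod.subset_diff[OF S finV, of "\<lambda>i. std_normal_density (x i)"]
    by (simp add: std_normal_prod_eq[OF fin] mult.commute)
  have alt: "alt_density V S A1 x = e1 / sqrt ((2*pi)^card S * det_on S A1) * P"
    "alt_density V S A2 x = e2 / sqrt ((2*pi)^card S * det_on S A2) * P"
    unfolding alt_density_def gauss_density_qform e1_def e2_def P_def by simp_all
  have exp: "exp (-(1/2) * qform S (\<lambda>i j. inv_on S A1 i j + inv_on S A2 i j - (if i = j then 1 else 0)) x)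
      = e1 * e2 / exp (-(1/2) * X)"
    unfolding qform_sum_minus_identity[OF fin] e1_def e2_def X_def
    by (simp add: exp_add[symmetric] exp_diff[symmetric] algebra_simps)
  show ?thesis unfolding P_def[symmetric] null alt exp using P D
    by (simp add: field_simps power_one_over real_sqrt_mult real_sqrt_power)
qed

lemma nn_integral_alt_density_product_same:
  assumes cov1: "covariance_matrix V A1" and cov2: "covariance_matrix V A2" and finV: "finite V"
    and S: "S \<subseteq> V" and d1: "det_on S A1 \<noteq> 0" and d2: "det_on S A2 \<noteq> 0"
    and Q: "Q = (\<lambda>i j. inv_on S A1 i j + inv_on S A2 i j - (if i = j then 1 else 0))"
    and pd: "pos_def_on S Q"
  shows "(\<integral>\<^sup>+x. ennreal (alt_density V S A1 x) * ennreal (alt_density V S A2 x)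
      * ennreal (1 / null_density V x) \<partial>PiM V (\<lambda>_. lborel))
    = ennreal (sqrt (det_on S (inv_on S A1) * det_on S (inv_on S A2) / det_on S Q))"
proof -
  have fin: "finite S" using finV S finite_subset by blast
  note D1 = covariance_det_on[OF cov1 finV S d1] and D2 = covariance_det_on[OF cov2 finV S d2]
  define c where "c = 1 / sqrt ((2*pi)^card S * det_on S A1 * det_on S A2)"
  have c: "0 < c" unfolding c_def using D1 D2 by simp
  have "\<forall>i\<in>S. \<forall>j\<in>S. Q i j = Q j i"
    unfolding Q using inv_on_symmetric[OF fin d1 covariance_symmetric[OF cov1 S]]
      inv_on_symmetric[OF fin d2 covariance_symmetric[OF cov2 S]] by auto
  note G = gaussian_integral[OF fin this pd]
  have "(\<integral>\<^sup>+x. ennreal (alt_density V S A1 x) * ennreal (alt_density V S A2 x)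
      * ennreal (1 / null_density V x) \<partial>PiM V (\<lambda>_. lborel))
    = (\<integral>\<^sup>+x. ennreal c * ennreal (exp (-(1/2) * qform S Q x))
      * ennreal (\<Prod>i\<in>V - S. std_normal_density (x i)) \<partial>PiM V (\<lambda>_. lborel))"
  proof (intro nn_integral_cong)
    fix x
    have "ennreal (alt_density V S A1 x) * ennreal (alt_density V S A2 x) * ennreal (1 / null_density V x)
        = ennreal (c * exp (-(1/2) * qform S Q x) * (\<Prod>i\<in>V - S. std_normal_density (x i)))"
      using alt_density_nonneg[OF cov1 finV S d1] alt_density_nonneg[OF cov2 finV S d2]
      by (simp add: ennreal_mult_mult_inverse null_density_pos
          alt_density_product_same[OF cov1 cov2 finV S d1 d2] c_def Q)
    also have "\<dots> = ennreal c * ennreal (exp (-(1/2) * qform S Q x))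
        * ennreal (\<Prod>i\<in>V - S. std_normal_density (x i))"
      using c by (simp add: ennreal_mult prod_nonneg)
    finally show "ennreal (alt_density V S A1 x) * ennreal (alt_density V S A2 x) * ennreal (1 / null_density V x)
        = ennreal c * ennreal (exp (-(1/2) * qform S Q x)) * ennreal (\<Prod>i\<in>V - S. std_normal_density (x i))" .
  qed
  also have "\<dots> = (\<integral>\<^sup>+x. ennreal c * ennreal (exp (-(1/2) * qform S Q x)) \<partial>PiM S (\<lambda>_. lborel))"
  proof (rule nn_integral_PiM_split_std_normal[OF finV S])
    show "(\<lambda>x. ennreal c * ennreal (exp (-(1/2) * qform S Q x))) \<in> borel_measurable (PiM S (\<lambda>_. lborel))"
      using borel_measurable_qform[of S S Q, OF order_refl] by measurable
    show "ennreal c * ennreal (exp (-(1/2) * qform S Q x)) = ennreal c * ennreal (exp (-(1/2) * qform S Q y))"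
      if "\<forall>i\<in>S. x i = y i" for x y
      using qform_cong[of S x y Q] that by simp
  qed
  also have "\<dots> = ennreal c * ennreal (sqrt ((2*pi)^card S / det_on S Q))"
    using borel_measurable_qform[of S S Q, OF order_refl] G by (subst nn_integral_cmult) auto
  also have "\<dots> = ennreal (sqrt (det_on S (inv_on S A1) * det_on S (inv_on S A2) / det_on S Q))"
  proof -
    have inv: "det_on S (inv_on S A1) = 1 / det_on S A1" "det_on S (inv_on S A2) = 1 / det_on S A2"
      using D1 D2 by (simp_all add: field_simps)
    have "c * sqrt ((2*pi)^card S / det_on S Q)
        = sqrt (det_on S (inv_on S A1) * det_on S (inv_on S A2) / det_on S Q)"
      unfolding c_def inv using D1(2) D2(2) G by (simp add: real_sqrt_mult real_sqrt_divide field_simps)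
    thus ?thesis using c G by (subst ennreal_mult[symmetric]) auto
  qed
  finally show ?thesis .
qed

lemma alt_density_product_disjoint:
  assumes finV: "finite V" and S: "S \<subseteq> V" and S': "S' \<subseteq> V" and disj: "S \<inter> S' = {}"
  shows "alt_density V S A1 x * alt_density V S' A2 x / null_density V x
    = gauss_density S A1 x * alt_density (V - S) S' A2 x"
proof -
  define P where "P = (\<lambda>T. \<Prod>i\<in>T. std_normal_density (x i))"
  have P: "0 < P T" for T unfolding P_def by (intro prod_pos) (simp add: normal_density_pos)
  have split: "P (A \<union> B) = P A * P B" if "A \<subseteq> V" "B \<subseteq> V" "A \<inter> B = {}" for A B
    unfolding P_def using that finV by (intro prod.union_disjoint) (auto intro: finite_subset)
  define W where "W = V - S - S'"
  have u: "V - S = S' \<union> W" "V - S' = S \<union> W" "V = S \<union> (S' \<union> W)"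
    and sub: "W \<subseteq> V" "S' \<union> W \<subseteq> V" and dis: "S' \<inter> W = {}" "S \<inter> W = {}" "S \<inter> (S' \<union> W) = {}"
    using S S' disj by (auto simp: W_def)
  have "P (V - S) = P S' * P W" by (simp only: u(1) split[OF S' sub(1) dis(1)])
  moreover have "P (V - S') = P S * P W" by (simp only: u(2) split[OF S sub(1) dis(2)])
  moreover have "P V = P S * (P S' * P W)"
    by (subst u(3)) (simp only: split[OF S sub(2) dis(3)] split[OF S' sub(1) dis(1)])
  ultimately show ?thesis using P[of S] P[of S'] P[of W]
    unfolding alt_density_def null_density_def P_def[symmetric] W_def[symmetric] by (simp add: field_simps)
qed

lemma nn_integral_alt_density_product_disjoint:
  assumes cov1: "covariance_matrix V A1" and cov2: "covariance_matrix V A2" and finV: "finite V"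
    and S: "S \<subseteq> V" and S': "S' \<subseteq> V" and disj: "S \<inter> S' = {}"
    and d1: "det_on S A1 \<noteq> 0" and d2: "det_on S' A2 \<noteq> 0"
  shows "(\<integral>\<^sup>+x. ennreal (alt_density V S A1 x) * ennreal (alt_density V S' A2 x)
    * ennreal (1 / null_density V x) \<partial>PiM V (\<lambda>_. lborel)) = 1"
proof -
  have S'_sub: "S' \<subseteq> V - S" using S' disj by auto
  have cov2': "covariance_matrix (V - S) A2" by (rule covariance_matrix_subset[OF cov2 finV]) auto
  have "(\<integral>\<^sup>+x. ennreal (alt_density V S A1 x) * ennreal (alt_density V S' A2 x)
      * ennreal (1 / null_density V x) \<partial>PiM V (\<lambda>_. lborel))
    = (\<integral>\<^sup>+x. ennreal (gauss_density S A1 x) * ennreal (alt_density (V - S) S' A2 x) \<partial>PiM V (\<lambda>_. lborel))"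
    using alt_density_nonneg[OF cov1 finV S d1] alt_density_nonneg[OF cov2 finV S' d2]
      gauss_density_nonneg[OF cov1 finV S d1] alt_density_nonneg[OF cov2' _ S'_sub d2] finV
    by (intro nn_integral_cong)
      (simp add: ennreal_mult_mult_inverse null_density_pos alt_density_product_disjoint[OF finV S S' disj]
        ennreal_mult)
  also have "\<dots> = (\<integral>\<^sup>+x. ennreal (gauss_density S A1 x) \<partial>PiM S (\<lambda>_. lborel))
      * (\<integral>\<^sup>+x. ennreal (alt_density (V - S) S' A2 x) \<partial>PiM (V - S) (\<lambda>_. lborel))"
    using borel_measurable_gauss_density[of S S A1] borel_measurable_alt_density[OF S'_sub, of A2]
    by (intro nn_integral_PiM_split[OF finV S])
      (auto intro: gauss_density_cong alt_density_cong[OF S'_sub] arg_cong[where f = ennreal])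
  also have "\<dots> = 1"
    using nn_integral_gauss_density[OF cov1 finV S d1] nn_integral_alt_density[OF cov2' _ S'_sub d2] finV
    by simp
  finally show ?thesis .
qed

lemma borel_measurable_gauss_density_param:
  assumes fin: "finite S" and SI: "S \<subseteq> I" and d: "\<forall>\<phi>\<in>space N. det_on S (F \<phi>) \<noteq> 0"
    and m: "\<And>i j. (\<lambda>\<phi>. F \<phi> i j) \<in> borel_measurable N"
  shows "(\<lambda>z. gauss_density S (F (fst z)) (snd z)) \<in> borel_measurable (N \<Otimes>\<^sub>M PiM I (\<lambda>_. lborel))"
proof -
  let ?P = "N \<Otimes>\<^sub>M PiM I (\<lambda>_. lborel)"
  have mF: "(\<lambda>z. F (fst z) i j) \<in> borel_measurable ?P" for i j
    by (rule measurable_compose[OF measurable_fst m])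
  have mc: "(\<lambda>z. snd z i) \<in> borel_measurable ?P" if "i \<in> S" for i
    by (rule measurable_compose[OF measurable_snd borel_measurable_component]) (use that SI in auto)
  define E where "E = (\<lambda>z. exp (-(1/2) * (\<Sum>i\<in>S. \<Sum>j\<in>S. snd z i * adj_inv_on S (F (fst z)) i j * snd z j))
            / sqrt ((2*pi)^card S * det_on S (F (fst z))))"
  have q: "(\<lambda>z. \<Sum>i\<in>S. \<Sum>j\<in>S. snd z i * adj_inv_on S (F (fst z)) i j * snd z j) \<in> borel_measurable ?P"
    by (intro borel_measurable_sum borel_measurable_times borel_measurable_adj_inv_on[OF fin] mF mc)
  have dm: "(\<lambda>z. det_on S (F (fst z))) \<in> borel_measurable ?P" by (intro borel_measurable_det_on mF)
  have mE: "E \<in> borel_measurable ?P" unfolding E_def using q dm by measurable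
  have eq: "gauss_density S (F (fst z)) (snd z) = E z" if "z \<in> space ?P" for z
  proof -
    have "fst z \<in> space N" using that by (auto simp: space_pair_measure)
    hence "inv_on S (F (fst z)) = adj_inv_on S (F (fst z))" using d inv_on_eq_adj_inv_on[OF fin] by auto
    thus ?thesis unfolding gauss_density_def E_def by simp
  qed
  have "(\<lambda>z. gauss_density S (F (fst z)) (snd z)) \<in> borel_measurable ?P \<longleftrightarrow> E \<in> borel_measurable ?P"
    by (rule measurable_cong) (rule eq)
  thus ?thesis using mE by simp
qed

lemma borel_measurable_alt_density_param:
  assumes fin: "finite V" and S: "S \<subseteq> V" and d: "\<forall>\<phi>\<in>space N. det_on S (F \<phi>) \<noteq> 0"
    and m: "\<And>i j. (\<lambda>\<phi>. F \<phi> i j) \<in> borel_measurable N"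
  shows "(\<lambda>z. ennreal (alt_density V S (F (fst z)) (snd z))) \<in> borel_measurable (N \<Otimes>\<^sub>M PiM V (\<lambda>_. lborel))"
proof -
  have finS: "finite S" using fin S finite_subset by blast
  have "(\<lambda>z. \<Prod>i\<in>V - S. std_normal_density (snd z i)) \<in> borel_measurable (N \<Otimes>\<^sub>M PiM V (\<lambda>_. lborel))"
    by (rule measurable_compose[OF measurable_snd borel_measurable_std_normal_prod]) auto
  thus ?thesis unfolding alt_density_def using borel_measurable_gauss_density_param[OF finS S d m] by measurable
qed

section \<open>The affinity of two densities\<close>

text \<open>A pointwise substitute for Cauchy-Schwarz: integrated against \<open>p\<close> and optimised over the free
  parameter \<open>l\<close>, it yields the chi-square bound on the affinity.\<close>

lemma min_lower_bound_real:
  fixes a b l :: real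
  assumes a: "0 < a" and l: "0 < l" and b: "0 \<le> b"
  shows "a/2 + (1/2 + l/2) * b \<le> min a b + l/4 * (b^2 / a) + (1/(4*l) + l/4) * a"
proof -
  have "min a b + l/4 * (b^2 / a) + (1/(4*l) + l/4) * a - (a/2 + (1/2 + l/2) * b)
      = (l * \<bar>b - a\<bar> - a)^2 / (4 * l * a)"
    using a l by (cases "a \<le> b") (simp_all add: min_def field_simps power2_eq_square)
  also have "\<dots> \<ge> 0" using a l by simp
  finally show ?thesis by simp
qed

lemma ennreal_min_lower_bound:
  fixes b :: ennreal
  assumes a: "0 < a" and l: "0 < l"
  shows "ennreal (1/2) * ennreal a + ennreal (1/2 + l/2) * b
         \<le> min (ennreal a) b + ennreal (l/4) * (b^2 * ennreal (1/a)) + ennreal (1/(4*l) + l/4) * ennreal a"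
proof (cases b)
  case (real b0)
  have "ennreal (a/2 + (1/2 + l/2) * b0) \<le> ennreal (min a b0 + l/4 * (b0^2 / a) + (1/(4*l) + l/4) * a)"
    using min_lower_bound_real[OF a l real(1)] by (rule ennreal_leI)
  moreover have "ennreal (1/2) * ennreal a = ennreal (a/2)"
    using a by (subst ennreal_mult[symmetric]) auto
  moreover have "ennreal (1/2 + l/2) * ennreal b0 = ennreal ((1/2 + l/2) * b0)"
    using l real(1) by (subst ennreal_mult[symmetric]) auto
  moreover have "ennreal (a/2) + ennreal ((1/2 + l/2) * b0) = ennreal (a/2 + (1/2 + l/2) * b0)"
    using a l real(1) by (subst ennreal_plus[symmetric]) auto
  moreover have "min (ennreal a) (ennreal b0) + ennreal (l/4) * (ennreal b0 ^ 2 * ennreal (1/a))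
      + ennreal (1/(4*l) + l/4) * ennreal a = ennreal (min a b0 + l/4 * (b0^2 / a) + (1/(4*l) + l/4) * a)"
    using a l real(1) by (simp add: min_ennreal ennreal_power flip: ennreal_mult ennreal_plus)
  ultimately show ?thesis using real(2) by (simp only:)
next
  case top
  thus ?thesis using a l by (simp add: top_power_ennreal ennreal_mult_top)
qed

lemma nn_integral_min_le_split:
  fixes p h :: "'a \<Rightarrow> ennreal"
  assumes "p \<in> borel_measurable M" "h \<in> borel_measurable M" "A \<in> sets M"
  shows "(\<integral>\<^sup>+x. min (p x) (h x) \<partial>M)
    \<le> (\<integral>\<^sup>+x. p x * indicator A x \<partial>M) + (\<integral>\<^sup>+x. h x * indicator (space M - A) x \<partial>M)"
proof -
  have "(\<integral>\<^sup>+x. min (p x) (h x) \<partial>M) \<le> (\<integral>\<^sup>+x. p x * indicator A x + h x * indicator (space M - A) x \<partial>M)"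
    by (intro nn_integral_mono) (auto split: split_indicator)
  also have "\<dots> = (\<integral>\<^sup>+x. p x * indicator A x \<partial>M) + (\<integral>\<^sup>+x. h x * indicator (space M - A) x \<partial>M)"
    by (rule nn_integral_add) (use assms in measurable)
  finally show ?thesis .
qed

lemma chi_square_bound_real:
  fixes x c :: real
  assumes x: "x \<le> 1" and H: "\<And>l. 0 < l \<Longrightarrow> 1 + l/2 \<le> x + l/4 * c + 1/(4*l) + l/4"
  shows "1 \<le> c" "1 - sqrt (c - 1) / 2 \<le> x"
proof -
  have lower: "1 - l * (c - 1) / 4 - 1 / (4 * l) \<le> x" if "0 < l" for l
    using H[OF that] by (simp add: algebra_simps diff_divide_distrib)
  show c: "1 \<le> c"
  proof (rule ccontr)
    assume "\<not> 1 \<le> c"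
    define s where "s = sqrt (1 - c)"
    have s: "0 < s" "s * s = 1 - c" using \<open>\<not> 1 \<le> c\<close> by (auto simp: s_def)
    have eq: "1 - (2 / s) * (c - 1) / 4 - 1 / (4 * (2 / s)) = 1 + 3 * s / 8"
      using s by (simp add: field_simps)
    have "1 + 3 * s / 8 \<le> x" using lower[of "2 / s"] s(1) unfolding eq by simp
    thus False using s(1) x by simp
  qed
  show "1 - sqrt (c - 1) / 2 \<le> x"
  proof (cases "c = 1")
    case True
    show ?thesis
    proof (rule ccontr)
      assume "\<not> ?thesis"
      hence "0 < 1 - x" using True by simp
      thus False using lower[of "1 / (1 - x)"] True by (simp add: field_simps)
    qed
  next
    case False
    define s where "s = sqrt (c - 1)"
    have s: "0 < s" "s * s = c - 1" using c False by (auto simp: s_def)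
    have eq: "1 - (1 / s) * (c - 1) / 4 - 1 / (4 * (1 / s)) = 1 - s / 2"
      using s by (simp add: field_simps)
    have "1 - s / 2 \<le> x" using lower[of "1 / s"] s(1) unfolding eq by simp
    thus ?thesis unfolding s_def .
  qed
qed

lemma nn_integral_min_density_tradeoff:
  fixes p :: "'a \<Rightarrow> real" and h :: "'a \<Rightarrow> ennreal"
  assumes p: "p \<in> borel_measurable M" "\<And>x. x \<in> space M \<Longrightarrow> 0 < p x" "(\<integral>\<^sup>+x. ennreal (p x) \<partial>M) = 1"
    and h: "h \<in> borel_measurable M" "(\<integral>\<^sup>+x. h x \<partial>M) = 1" and l: "0 < l"
  shows "ennreal (1/2) + ennreal (1/2 + l/2) \<le> (\<integral>\<^sup>+x. min (ennreal (p x)) (h x) \<partial>M)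
    + ennreal (l/4) * (\<integral>\<^sup>+x. h x ^ 2 * ennreal (1 / p x) \<partial>M) + ennreal (1/(4*l) + l/4)"
proof -
  have "ennreal (1/2) + ennreal (1/2 + l/2)
      = (\<integral>\<^sup>+x. ennreal (1/2) * ennreal (p x) + ennreal (1/2 + l/2) * h x \<partial>M)"
    using p h by (simp add: nn_integral_add nn_integral_cmult)
  also have "\<dots> \<le> (\<integral>\<^sup>+x. min (ennreal (p x)) (h x) + ennreal (l/4) * (h x ^ 2 * ennreal (1 / p x))
      + ennreal (1/(4*l) + l/4) * ennreal (p x) \<partial>M)"
    by (intro nn_integral_mono ennreal_min_lower_bound p(2) l)
  also have "\<dots> = (\<integral>\<^sup>+x. min (ennreal (p x)) (h x) \<partial>M)
      + ennreal (l/4) * (\<integral>\<^sup>+x. h x ^ 2 * ennreal (1 / p x) \<partial>M) + ennreal (1/(4*l) + l/4)"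
    using p h by (simp add: nn_integral_add nn_integral_cmult)
  finally show ?thesis .
qed

lemma nn_integral_min_density_ge:
  fixes p :: "'a \<Rightarrow> real" and h :: "'a \<Rightarrow> ennreal"
  assumes p: "p \<in> borel_measurable M" "\<And>x. x \<in> space M \<Longrightarrow> 0 < p x" "(\<integral>\<^sup>+x. ennreal (p x) \<partial>M) = 1"
    and h: "h \<in> borel_measurable M" "(\<integral>\<^sup>+x. h x \<partial>M) = 1"
    and chi: "(\<integral>\<^sup>+x. h x ^ 2 * ennreal (1 / p x) \<partial>M) \<le> ennreal c"
  shows "1 \<le> c" "ennreal (1 - sqrt (c - 1) / 2) \<le> (\<integral>\<^sup>+x. min (ennreal (p x)) (h x) \<partial>M)"
proof -
  define X where "X = (\<integral>\<^sup>+x. min (ennreal (p x)) (h x) \<partial>M)"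
  define c' where "c' = max c 0"
  have "X \<le> (\<integral>\<^sup>+x. ennreal (p x) \<partial>M)" unfolding X_def by (intro nn_integral_mono) simp
  hence "X \<le> 1" using p(3) by simp
  then obtain x where X: "X = ennreal x" and x: "0 \<le> x" "x \<le> 1"
    by (metis ennreal_cases ennreal_le_1 enn2real_nonneg ennreal_enn2real ennreal_one_neq_top
        top.extremum_unique)
  have c': "0 \<le> c'" "ennreal c = ennreal c'" unfolding c'_def by (auto simp: ennreal_max_0)
  have H: "1 + l/2 \<le> x + l/4 * c' + 1/(4*l) + l/4" if l: "0 < l" for l
  proof -
    have "ennreal (1 + l/2) = ennreal (1/2 + (1/2 + l/2))" by simp
    also have "\<dots> = ennreal (1/2) + ennreal (1/2 + l/2)" by (rule ennreal_plus) (use l in auto)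
    also have "\<dots> \<le> X + ennreal (l/4) * (\<integral>\<^sup>+x. h x ^ 2 * ennreal (1 / p x) \<partial>M) + ennreal (1/(4*l) + l/4)"
      unfolding X_def by (rule nn_integral_min_density_tradeoff[OF p h l])
    also have "\<dots> \<le> X + ennreal (l/4) * ennreal c' + ennreal (1/(4*l) + l/4)"
      using chi c' by (intro add_mono mult_left_mono order.refl) auto
    also have "\<dots> = ennreal (x + l/4 * c' + (1/(4*l) + l/4))"
      using l c' x by (simp add: X ennreal_plus flip: ennreal_mult)
    finally have "ennreal (1 + l/2) \<le> ennreal (x + l/4 * c' + (1/(4*l) + l/4))" .
    thus ?thesis using l c' x by (subst (asm) ennreal_le_iff) auto
  qed
  have "1 \<le> c'" "1 - sqrt (c' - 1) / 2 \<le> x" by (rule chi_square_bound_real[OF x(2) H]; simp)+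
  thus "1 \<le> c" "ennreal (1 - sqrt (c - 1) / 2) \<le> X" unfolding X c'_def by (auto intro: ennreal_leI)
qed

section \<open>The Bayes risk of detecting a Gaussian block\<close>

lemma sum_square_mult:
  fixes a :: "'b \<Rightarrow> 'a::comm_semiring_1"
  shows "(\<Sum>S\<in>C. w * a S) ^ 2 * q = (\<Sum>S\<in>C. \<Sum>S'\<in>C. w\<^sup>2 * (a S * a S' * q))"
proof -
  have "(\<Sum>S\<in>C. w * a S) ^ 2 * q = (\<Sum>S\<in>C. \<Sum>S'\<in>C. (w * a S) * (w * a S') * q)"
    unfolding power2_eq_square sum_product by (simp add: sum_distrib_right)
  moreover have "(w * x) * (w * y) * q = w\<^sup>2 * (x * y * q)" for x y
    by (simp add: power2_eq_square mult_ac)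
  ultimately show ?thesis by simp
qed

locale gaussian_detection =
  fixes V :: "'a set" and C :: "'a set set" and \<pi> :: "'p measure"
    and \<Gamma> :: "'p \<Rightarrow> 'a \<Rightarrow> 'a \<Rightarrow> real"
  assumes finite_V: "finite V" and finite_C: "finite C" and C_nonempty: "C \<noteq> {}"
    and C_subset: "S \<in> C \<Longrightarrow> S \<subseteq> V" and disjoint_C: "disjoint C"
    and prob_space_\<pi>: "prob_space \<pi>"
    and covariance: "\<phi> \<in> space \<pi> \<Longrightarrow> covariance_matrix V (\<Gamma> \<phi>)"
    and nonsingular: "\<phi> \<in> space \<pi> \<Longrightarrow> S \<in> C \<Longrightarrow> det_on S (\<Gamma> \<phi>) \<noteq> 0"
    and measurable_\<Gamma>: "(\<lambda>\<phi>. \<Gamma> \<phi> i j) \<in> borel_measurable \<pi>"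
begin

sublocale prob_space \<pi> by (rule prob_space_\<pi>)

abbreviation lborel_V :: "('a \<Rightarrow> real) measure" where
  "lborel_V \<equiv> PiM V (\<lambda>_. lborel)"

definition alt_mixture :: "'a set \<Rightarrow> ('a \<Rightarrow> real) \<Rightarrow> ennreal" where
  "alt_mixture S x = (\<integral>\<^sup>+\<phi>. ennreal (alt_density V S (\<Gamma> \<phi>) x) \<partial>\<pi>)"

definition mixture :: "('a \<Rightarrow> real) \<Rightarrow> ennreal" where
  "mixture x = (\<Sum>S\<in>C. ennreal (1 / real (card C)) * alt_mixture S x)"

interpretation \<pi>V: pair_sigma_finite \<pi> lborel_V
  by (intro pair_sigma_finite.intro prob_space_imp_sigma_finite[OF prob_space_\<pi>]
      product_sigma_finite.sigma_finite[OF product_sigma_finite_lborel finite_V])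

interpretation \<pi>\<pi>: pair_prob_space \<pi> \<pi> ..

interpretation \<pi>\<pi>V: pair_sigma_finite "\<pi> \<Otimes>\<^sub>M \<pi>" lborel_V
  by (intro pair_sigma_finite.intro prob_space_imp_sigma_finite[OF \<pi>\<pi>.prob_space_axioms]
      product_sigma_finite.sigma_finite[OF product_sigma_finite_lborel finite_V])

lemma borel_measurable_alt_density_joint:
  "S \<in> C \<Longrightarrow> (\<lambda>z. ennreal (alt_density V S (\<Gamma> (fst z)) (snd z))) \<in> borel_measurable (\<pi> \<Otimes>\<^sub>M lborel_V)"
  by (rule borel_measurable_alt_density_param[OF finite_V C_subset])
     (auto simp: nonsingular measurable_\<Gamma>)

lemma borel_measurable_alt_density_at:
  "S \<in> C \<Longrightarrow> x \<in> space lborel_V \<Longrightarrow> (\<lambda>\<phi>. ennreal (alt_density V S (\<Gamma> \<phi>) x)) \<in> borel_measurable \<pi>"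
  using measurable_compose[OF measurable_Pair2' borel_measurable_alt_density_joint] by simp

lemma borel_measurable_alt_mixture: "S \<in> C \<Longrightarrow> alt_mixture S \<in> borel_measurable lborel_V"
proof -
  assume S: "S \<in> C"
  have "(\<lambda>z. ennreal (alt_density V S (\<Gamma> (snd z)) (fst z))) \<in> borel_measurable (lborel_V \<Otimes>\<^sub>M \<pi>)"
    using measurable_compose[OF _ borel_measurable_alt_density_joint[OF S], of "\<lambda>z. (snd z, fst z)"]
    by simp
  from borel_measurable_nn_integral_fst[OF this] show ?thesis by (simp add: alt_mixture_def[abs_def])
qed

lemma borel_measurable_mixture: "mixture \<in> borel_measurable lborel_V"
  unfolding mixture_def[abs_def] using borel_measurable_alt_mixture by measurable

lemma nn_integral_alt_mixture: "S \<in> C \<Longrightarrow> (\<integral>\<^sup>+x. alt_mixture S x \<partial>lborel_V) = 1"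
proof -
  assume S: "S \<in> C"
  have "(\<integral>\<^sup>+x. alt_mixture S x \<partial>lborel_V) = (\<integral>\<^sup>+\<phi>. (\<integral>\<^sup>+x. ennreal (alt_density V S (\<Gamma> \<phi>) x) \<partial>lborel_V) \<partial>\<pi>)"
    unfolding alt_mixture_def
    by (rule \<pi>V.Fubini') (use borel_measurable_alt_density_joint[OF S] in \<open>simp add: case_prod_beta'\<close>)
  also have "\<dots> = (\<integral>\<^sup>+\<phi>. 1 \<partial>\<pi>)"
    using S by (intro nn_integral_cong)
      (simp add: nn_integral_alt_density[OF covariance finite_V C_subset nonsingular])
  finally show ?thesis by (simp add: emeasure_space_1)
qed

lemma nn_integral_mixture: "(\<integral>\<^sup>+x. mixture x \<partial>lborel_V) = 1"
proof -
  have "(\<integral>\<^sup>+x. mixture x \<partial>lborel_V) = (\<Sum>S\<in>C. ennreal (1 / real (card C)))"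
    unfolding mixture_def using borel_measurable_alt_mixture
    by (simp add: nn_integral_sum nn_integral_cmult nn_integral_alt_mixture)
  also have "\<dots> = 1"
    using finite_C C_nonempty by (simp add: card_gt_0_iff ennreal_of_nat_eq_real_of_nat flip: ennreal_mult)
  finally show ?thesis .
qed

lemma nn_integral_emeasure_alt_law:
  assumes S: "S \<in> C" and A: "A \<in> sets lborel_V"
  shows "(\<integral>\<^sup>+\<phi>. emeasure (alt_law V S (\<Gamma> \<phi>)) A \<partial>\<pi>) = (\<integral>\<^sup>+x. alt_mixture S x * indicator A x \<partial>lborel_V)"
proof -
  have "(\<integral>\<^sup>+\<phi>. emeasure (alt_law V S (\<Gamma> \<phi>)) A \<partial>\<pi>)
      = (\<integral>\<^sup>+\<phi>. (\<integral>\<^sup>+x. ennreal (alt_density V S (\<Gamma> \<phi>) x) * indicator A x \<partial>lborel_V) \<partial>\<pi>)"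
    using A borel_measurable_alt_density[OF C_subset[OF S]]
    by (intro nn_integral_cong) (simp add: alt_law_eq_density emeasure_density)
  also have "\<dots> = (\<integral>\<^sup>+x. (\<integral>\<^sup>+\<phi>. ennreal (alt_density V S (\<Gamma> \<phi>) x) * indicator A x \<partial>\<pi>) \<partial>lborel_V)"
    using borel_measurable_alt_density_joint[OF S] A
    by (intro \<pi>V.Fubini'[symmetric]) (simp add: case_prod_beta', measurable)
  also have "\<dots> = (\<integral>\<^sup>+x. alt_mixture S x * indicator A x \<partial>lborel_V)"
    unfolding alt_mixture_def
    by (intro nn_integral_cong nn_integral_multc borel_measurable_alt_density_at[OF S])
  finally show ?thesis .
qed

lemma nn_integral_min_le_bayes_risk:
  "(\<integral>\<^sup>+x. min (ennreal (null_density V x)) (mixture x) \<partial>lborel_V) \<le> bayes_risk V C \<pi> \<Gamma>"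
  unfolding bayes_risk_def
proof (rule INF_greatest)
  fix f assume "f \<in> tests V"
  hence A: "{x \<in> space lborel_V. f x} \<in> sets lborel_V" by (simp add: tests_def)
  define w where "w = ennreal (1 / real (card C))"
  have null_density: "(\<lambda>x. ennreal (null_density V x)) \<in> borel_measurable lborel_V"
    unfolding null_density_def by (intro measurable_compose[OF borel_measurable_std_normal_prod]) auto
  have "(\<Sum>S\<in>C. w * (\<integral>\<^sup>+\<phi>. emeasure (alt_law V S (\<Gamma> \<phi>)) {x \<in> space (alt_law V S (\<Gamma> \<phi>)). \<not> f x} \<partial>\<pi>))
      = (\<Sum>S\<in>C. \<integral>\<^sup>+x. w * (alt_mixture S x * indicator (space lborel_V - {x \<in> space lborel_V. f x}) x) \<partial>lborel_V)"
  proof (intro sum.cong refl)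
    fix S assume S: "S \<in> C"
    have "{x \<in> space (alt_law V S (\<Gamma> \<phi>)). \<not> f x} = space lborel_V - {x \<in> space lborel_V. f x}" for \<phi>
      by (auto simp: alt_law_eq_density)
    thus "w * (\<integral>\<^sup>+\<phi>. emeasure (alt_law V S (\<Gamma> \<phi>)) {x \<in> space (alt_law V S (\<Gamma> \<phi>)). \<not> f x} \<partial>\<pi>)
        = (\<integral>\<^sup>+x. w * (alt_mixture S x * indicator (space lborel_V - {x \<in> space lborel_V. f x}) x) \<partial>lborel_V)"
      using A S borel_measurable_alt_mixture[OF S]
      by (simp add: nn_integral_emeasure_alt_law nn_integral_cmult)
  qed
  also have "\<dots> = (\<integral>\<^sup>+x. mixture x * indicator (space lborel_V - {x \<in> space lborel_V. f x}) x \<partial>lborel_V)"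
    unfolding mixture_def w_def sum_distrib_right mult.assoc using A
    by (intro nn_integral_sum[symmetric] borel_measurable_times_ennreal borel_measurable_const
        borel_measurable_indicator borel_measurable_alt_mixture sets.compl_sets)
  finally show "(\<integral>\<^sup>+x. min (ennreal (null_density V x)) (mixture x) \<partial>lborel_V)
      \<le> emeasure (null_law V) {x \<in> space (null_law V). f x}
        + (\<Sum>S\<in>C. ennreal (1 / real (card C)) *
           (\<integral>\<^sup>+\<phi>. emeasure (alt_law V S (\<Gamma> \<phi>)) {x \<in> space (alt_law V S (\<Gamma> \<phi>)). \<not> f x} \<partial>\<pi>))"
    using nn_integral_min_le_split[OF null_density borel_measurable_mixture A] A null_density
    by (simp add: w_def null_law_eq_density emeasure_density)
qed

definition cross_moment :: "'a set \<Rightarrow> 'a set \<Rightarrow> 'p \<times> 'p \<Rightarrow> ennreal" where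
  "cross_moment S S' z = (\<integral>\<^sup>+x. ennreal (alt_density V S (\<Gamma> (fst z)) x)
     * ennreal (alt_density V S' (\<Gamma> (snd z)) x) * ennreal (1 / null_density V x) \<partial>lborel_V)"

lemma alt_mixture_mult:
  assumes S: "S \<in> C" and S': "S' \<in> C" and x: "x \<in> space lborel_V"
  shows "alt_mixture S x * alt_mixture S' x = (\<integral>\<^sup>+z. ennreal (alt_density V S (\<Gamma> (fst z)) x)
    * ennreal (alt_density V S' (\<Gamma> (snd z)) x) \<partial>(\<pi> \<Otimes>\<^sub>M \<pi>))"
proof -
  let ?F = "\<lambda>S \<phi>. ennreal (alt_density V S (\<Gamma> \<phi>) x)"
  have "alt_mixture S x * alt_mixture S' x = (\<integral>\<^sup>+\<phi>1. (\<integral>\<^sup>+\<phi>2. ?F S \<phi>1 * ?F S' \<phi>2 \<partial>\<pi>) \<partial>\<pi>)"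
    unfolding alt_mixture_def using borel_measurable_alt_density_at[OF _ x] S S'
    by (simp add: nn_integral_multc nn_integral_cmult)
  moreover have "(\<lambda>z. ?F S (fst z) * ?F S' (snd z)) \<in> borel_measurable (\<pi> \<Otimes>\<^sub>M \<pi>)"
    using measurable_compose[OF measurable_fst borel_measurable_alt_density_at[OF S x]]
      measurable_compose[OF measurable_snd borel_measurable_alt_density_at[OF S' x]]
    by measurable
  from nn_integral_fst[OF this] have "(\<integral>\<^sup>+\<phi>1. (\<integral>\<^sup>+\<phi>2. ?F S \<phi>1 * ?F S' \<phi>2 \<partial>\<pi>) \<partial>\<pi>)
      = (\<integral>\<^sup>+z. ?F S (fst z) * ?F S' (snd z) \<partial>(\<pi> \<Otimes>\<^sub>M \<pi>))" by simp
  ultimately show ?thesis by simp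
qed

lemma borel_measurable_cross_moment_integrand:
  assumes S: "S \<in> C" and S': "S' \<in> C"
  shows "(\<lambda>(z, x). ennreal (alt_density V S (\<Gamma> (fst z)) x) * ennreal (alt_density V S' (\<Gamma> (snd z)) x)
    * ennreal (1 / null_density V x)) \<in> borel_measurable ((\<pi> \<Otimes>\<^sub>M \<pi>) \<Otimes>\<^sub>M lborel_V)"
proof -
  have "(\<lambda>u. (fst (fst u), snd u)) \<in> measurable ((\<pi> \<Otimes>\<^sub>M \<pi>) \<Otimes>\<^sub>M lborel_V) (\<pi> \<Otimes>\<^sub>M lborel_V)"
    "(\<lambda>u. (snd (fst u), snd u)) \<in> measurable ((\<pi> \<Otimes>\<^sub>M \<pi>) \<Otimes>\<^sub>M lborel_V) (\<pi> \<Otimes>\<^sub>M lborel_V)"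
    by measurable
  note m = measurable_compose[OF this(1) borel_measurable_alt_density_joint[OF S]]
    measurable_compose[OF this(2) borel_measurable_alt_density_joint[OF S']]
  have "(\<lambda>u. ennreal (1 / null_density V (snd u))) \<in> borel_measurable ((\<pi> \<Otimes>\<^sub>M \<pi>) \<Otimes>\<^sub>M lborel_V)"
    using borel_measurable_null_density[of V] by measurable
  with m show ?thesis unfolding case_prod_beta' by (intro borel_measurable_times_ennreal) auto
qed

lemma nn_integral_alt_mixture_product:
  assumes S: "S \<in> C" and S': "S' \<in> C"
  shows "(\<integral>\<^sup>+x. alt_mixture S x * alt_mixture S' x * ennreal (1 / null_density V x) \<partial>lborel_V)
    = (\<integral>\<^sup>+z. cross_moment S S' z \<partial>(\<pi> \<Otimes>\<^sub>M \<pi>))"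
proof -
  have "(\<integral>\<^sup>+x. alt_mixture S x * alt_mixture S' x * ennreal (1 / null_density V x) \<partial>lborel_V)
      = (\<integral>\<^sup>+x. (\<integral>\<^sup>+z. ennreal (alt_density V S (\<Gamma> (fst z)) x) * ennreal (alt_density V S' (\<Gamma> (snd z)) x)
          * ennreal (1 / null_density V x) \<partial>(\<pi> \<Otimes>\<^sub>M \<pi>)) \<partial>lborel_V)"
    using borel_measurable_alt_density_at[OF S] borel_measurable_alt_density_at[OF S']
    by (intro nn_integral_cong) (simp add: alt_mixture_mult[OF S S'] nn_integral_multc)
  also have "\<dots> = (\<integral>\<^sup>+z. cross_moment S S' z \<partial>(\<pi> \<Otimes>\<^sub>M \<pi>))"
    unfolding cross_moment_def by (rule \<pi>\<pi>V.Fubini'[OF borel_measurable_cross_moment_integrand[OF S S']])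
  finally show ?thesis .
qed

lemma cross_moment_disjoint:
  assumes "S \<in> C" "S' \<in> C" "S \<noteq> S'" "z \<in> space (\<pi> \<Otimes>\<^sub>M \<pi>)"
  shows "cross_moment S S' z = 1"
proof -
  have z: "fst z \<in> space \<pi>" "snd z \<in> space \<pi>" using assms(4) by (auto simp: space_pair_measure)
  show ?thesis unfolding cross_moment_def
    by (rule nn_integral_alt_density_product_disjoint[OF covariance[OF z(1)] covariance[OF z(2)]
          finite_V C_subset[OF assms(1)] C_subset[OF assms(2)] disjointD[OF disjoint_C assms(1-3)]
          nonsingular[OF z(1) assms(1)] nonsingular[OF z(2) assms(2)]])
qed

lemma nn_integral_cross_moment_le_V_term:
  assumes S: "S \<in> C" shows "(\<integral>\<^sup>+z. cross_moment S S z \<partial>(\<pi> \<Otimes>\<^sub>M \<pi>)) \<le> V_term S \<pi> \<Gamma>"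
  unfolding V_term_def Let_def
proof (intro nn_integral_mono)
  fix z assume "z \<in> space (\<pi> \<Otimes>\<^sub>M \<pi>)"
  hence z: "fst z \<in> space \<pi>" "snd z \<in> space \<pi>" by (auto simp: space_pair_measure)
  let ?Q = "\<lambda>i j. inv_on S (\<Gamma> (fst z)) i j + inv_on S (\<Gamma> (snd z)) i j - (if i = j then 1 else 0)"
  show "cross_moment S S z \<le> (if pos_def_on S ?Q then ennreal (sqrt (det_on S (inv_on S (\<Gamma> (fst z)))
      * det_on S (inv_on S (\<Gamma> (snd z))) / det_on S ?Q)) else \<infinity>)"
    using nn_integral_alt_density_product_same[OF covariance[OF z(1)] covariance[OF z(2)] finite_V
        C_subset[OF S] nonsingular[OF z(1) S] nonsingular[OF z(2) S] refl]
    by (simp add: cross_moment_def)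
qed

lemma sum_nn_integral_cross_moment_le:
  assumes S: "S \<in> C"
  shows "(\<Sum>S'\<in>C. \<integral>\<^sup>+z. cross_moment S S' z \<partial>(\<pi> \<Otimes>\<^sub>M \<pi>)) \<le> V_term S \<pi> \<Gamma> + of_nat (card C - 1)"
proof -
  have "(\<Sum>S'\<in>C - {S}. \<integral>\<^sup>+z. cross_moment S S' z \<partial>(\<pi> \<Otimes>\<^sub>M \<pi>)) = (\<Sum>S'\<in>C - {S}. 1)"
  proof (intro sum.cong refl)
    fix S' assume "S' \<in> C - {S}"
    hence "(\<integral>\<^sup>+z. cross_moment S S' z \<partial>(\<pi> \<Otimes>\<^sub>M \<pi>)) = (\<integral>\<^sup>+z. 1 \<partial>(\<pi> \<Otimes>\<^sub>M \<pi>))"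
      using S cross_moment_disjoint[OF S] by (intro nn_integral_cong) blast
    thus "(\<integral>\<^sup>+z. cross_moment S S' z \<partial>(\<pi> \<Otimes>\<^sub>M \<pi>)) = 1" by (simp add: \<pi>\<pi>.emeasure_space_1)
  qed
  also have "\<dots> = of_nat (card C - 1)" using finite_C S by (simp add: card_Diff_singleton)
  finally show ?thesis
    using sum.remove[OF finite_C S, of "\<lambda>S'. \<integral>\<^sup>+z. cross_moment S S' z \<partial>(\<pi> \<Otimes>\<^sub>M \<pi>)"]
      nn_integral_cross_moment_le_V_term[OF S] by (simp add: add_right_mono)
qed

lemma chi_square_mixture:
  "(\<integral>\<^sup>+x. mixture x ^ 2 * ennreal (1 / null_density V x) \<partial>lborel_V)
    \<le> ennreal (1 / real (card C)) ^ 2 * ((\<Sum>S\<in>C. V_term S \<pi> \<Gamma>) + of_nat (card C * (card C - 1)))"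
proof -
  define w where "w = ennreal (1 / real (card C))"
  let ?q = "\<lambda>x. ennreal (1 / null_density V x)"
  have m: "(\<lambda>x. w\<^sup>2 * (alt_mixture S x * alt_mixture S' x * ?q x)) \<in> borel_measurable lborel_V"
    if "S \<in> C" "S' \<in> C" for S S'
    using borel_measurable_alt_mixture[OF that(1)] borel_measurable_alt_mixture[OF that(2)]
      borel_measurable_null_density[of V] by measurable
  have "(\<integral>\<^sup>+x. mixture x ^ 2 * ?q x \<partial>lborel_V)
      = (\<integral>\<^sup>+x. (\<Sum>S\<in>C. \<Sum>S'\<in>C. w\<^sup>2 * (alt_mixture S x * alt_mixture S' x * ?q x)) \<partial>lborel_V)"
    unfolding mixture_def w_def by (simp only: sum_square_mult)
  also have "\<dots> = (\<Sum>S\<in>C. \<Sum>S'\<in>C. w\<^sup>2 * (\<integral>\<^sup>+z. cross_moment S S' z \<partial>(\<pi> \<Otimes>\<^sub>M \<pi>)))"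
    using m borel_measurable_alt_mixture borel_measurable_null_density[of V]
    by (simp add: nn_integral_sum nn_integral_cmult nn_integral_alt_mixture_product)
  also have "\<dots> \<le> (\<Sum>S\<in>C. w\<^sup>2 * (V_term S \<pi> \<Gamma> + of_nat (card C - 1)))"
    unfolding sum_distrib_left[symmetric]
    by (intro sum_mono mult_left_mono sum_nn_integral_cross_moment_le) simp_all
  also have "\<dots> = w\<^sup>2 * ((\<Sum>S\<in>C. V_term S \<pi> \<Gamma>) + of_nat (card C * (card C - 1)))"
    by (simp add: sum_distrib_left sum.distrib distrib_left mult_ac)
  finally show ?thesis unfolding w_def .
qed

end

lemma finite_grid: "finite (grid m d)"
proof -
  have "grid m d \<subseteq> {xs. set xs \<subseteq> {1..m} \<and> length xs = d}" unfolding grid_def by auto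
  thus ?thesis by (rule finite_subset) (simp add: finite_lists_length_eq)
qed

lemma ennreal_chi_square_constant:
  fixes n :: nat and t :: real
  assumes n: "0 < n"
  shows "ennreal (1 / real n) ^ 2 * (ennreal t + of_nat (n * (n - 1)))
    = ennreal ((max t 0 + real n * (real n - 1)) / (real n)\<^sup>2)"
proof -
  have "ennreal t + of_nat (n * (n - 1)) = ennreal (max t 0) + ennreal (real n * (real n - 1))"
    using n by (simp add: ennreal_max_0 ennreal_of_nat_eq_real_of_nat of_nat_diff)
  also have "\<dots> = ennreal (max t 0 + real n * (real n - 1))"
    using n by (intro ennreal_plus[symmetric]) auto
  finally have "ennreal (1 / real n) ^ 2 * (ennreal t + of_nat (n * (n - 1)))
      = ennreal (1 / (real n)\<^sup>2) * ennreal (max t 0 + real n * (real n - 1))"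
    by (simp add: ennreal_power power_one_over)
  also have "\<dots> = ennreal ((max t 0 + real n * (real n - 1)) / (real n)\<^sup>2)"
    using n by (subst ennreal_mult[symmetric]) auto
  finally show ?thesis .
qed

theorem proposition2p1:
  fixes m d :: nat and C :: "nat list set set" and \<pi> :: "'p measure"
    and \<Gamma> :: "'p \<Rightarrow> nat list \<Rightarrow> nat list \<Rightarrow> real" and t :: real
  assumes "finite C" and "C \<noteq> {}"
    and "\<forall>S\<in>C. S \<subseteq> grid m d \<and> S \<noteq> {}"
    and "disjoint C"
    and "prob_space \<pi>"
    and "\<forall>\<phi>\<in>space \<pi>. covariance_matrix (grid m d) (\<Gamma> \<phi>)"
    and "\<forall>\<phi>\<in>space \<pi>. \<forall>S. S \<subseteq> grid m d \<longrightarrow> det_on S (\<Gamma> \<phi>) \<noteq> 0"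
    and "\<forall>i j. (\<lambda>\<phi>. \<Gamma> \<phi> i j) \<in> borel_measurable \<pi>"
    and "(\<Sum>S\<in>C. V_term S \<pi> \<Gamma>) = ennreal t"
  shows "ennreal (1 - sqrt t / (2 * real (card C))) \<le> bayes_risk (grid m d) C \<pi> \<Gamma>"
proof -
  interpret gaussian_detection "grid m d" C \<pi> \<Gamma>
    \<comment> \<open>the sets in \<open>C\<close> need not be nonempty\<close>
    using assms finite_grid by (intro gaussian_detection.intro) auto
  define n where "n = card C"
  have n: "0 < n" using assms(1,2) by (simp add: n_def card_gt_0_iff)
  define c where "c = (max t 0 + real n * (real n - 1)) / (real n)\<^sup>2"
  have "(\<integral>\<^sup>+x. mixture x ^ 2 * ennreal (1 / null_density (grid m d) x) \<partial>lborel_V) \<le> ennreal c"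
    using chi_square_mixture ennreal_chi_square_constant[OF n, of t] assms(9) by (simp add: c_def n_def)
  note affinity = nn_integral_min_density_ge[OF borel_measurable_null_density null_density_pos
      nn_integral_null_density[OF finite_V] borel_measurable_mixture nn_integral_mixture this]
  have "real n \<le> t" using affinity(1) n by (simp add: c_def field_simps power2_eq_square max_def split: if_splits)
  hence "sqrt (c - 1) \<le> sqrt t / real n"
    using n by (simp add: c_def field_simps power2_eq_square real_sqrt_divide flip: real_sqrt_mult)
  hence "ennreal (1 - sqrt t / (2 * real (card C))) \<le> ennreal (1 - sqrt (c - 1) / 2)"
    by (intro ennreal_leI) (simp add: n_def field_simps)
  thus ?thesis using affinity(2) nn_integral_min_le_bayes_risk by (blast intro: order.trans)
qed

end
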